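(* The full generating functions $A(z),B(z),C(z)$ satisfy \[ A(z)=\frac{d^2x^8z^2}{1-x^4z}+\frac{dx^4z}{(1-x^4z)^2}A(z)+\frac{dx^4z}{1-x^4z}B(z)+dx^4zC(z). \]
   Context: A cell is a closed unit square $[i,i+1]\times[j,j+1]$, $i,j\in\mathbb{Z}$, identified with $(i,j)$. A polyomino is a finite nonempty set of cells connected under edge-adjacency, up to translation. The $n$-th diagonal is the set of cells $(i,j)$ with $i+j=n$. A polyomino $P$ is diagonally convex (a DCP) if for every $n$ its cells on the $n$-th diagonal are $(i,n-i)$ with $i$ ranging over an interval. $\mathrm{di}(P)$ is the number of $n$ for which $P$ has a cell on the $n$-th diagonal; $\mathrm{pe}(P)$ is the number of unit edges separating a cell of $P$ from a cell not in $P$; if $m$ is the largest $n$ for which $P$ meets the $n$-th diagonal, the last diagonal of $P$ is its set of cells on the $m$-th diagonal and $\mathrm{la}(P)$ is its number of cells. Noses: let $P$ be a DCP with at least two diagonals, and let $a=(i_a,j_a)$ and $b=(i_b,j_b)$ be the cells of $P$ on the $(m-1)$-th diagonal with smallest and largest first coordinate respectively (possibly $a=b$). If $(i_a,j_a+1)\in P$ it is a nose of $P$; if $(i_b+1,j_b)\in P$ it is a nose of $P$. Thus $P$ has two, one or zero noses. Define $A(z),B(z),C(z)$ as $\sum_P d^{\mathrm{di}(P)}x^{\mathrm{pe}(P)}z^{\mathrm{la}(P)}$, summed over DCPs with at least two diagonals having respectively exactly two, exactly one, exactly zero noses; these are formal power series in $d,x,z$. *)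

theory Defs
  imports Main "HOL-Computational_Algebra.Formal_Power_Series"
begin

type_synonym cell = "int \<times> int"

definition adj :: "cell \<Rightarrow> cell \<Rightarrow> bool" where
  "adj c c' \<longleftrightarrow> \<bar>fst c - fst c'\<bar> + \<bar>snd c - snd c'\<bar> = 1"

definition edge_connected :: "cell set \<Rightarrow> bool" where
  "edge_connected P \<longleftrightarrow>
     (\<forall>a\<in>P. \<forall>b\<in>P. (a, b) \<in> {(c, c'). c \<in> P \<and> c' \<in> P \<and> adj c c'}\<^sup>*)"

definition polyomino :: "cell set \<Rightarrow> bool" where
  "polyomino P \<longleftrightarrow> finite P \<and> P \<noteq> {} \<and> edge_connected P"

text \<open>Canonical representative of a translation class: the smallest first and
  second coordinates occurring are both 0.\<close>
definition normalized :: "cell set \<Rightarrow> bool" where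
  "normalized P \<longleftrightarrow> (\<forall>(i, j)\<in>P. 0 \<le> i \<and> 0 \<le> j) \<and>
     (\<exists>j. (0, j) \<in> P) \<and> (\<exists>i. (i, 0) \<in> P)"

definition DCP :: "cell set \<Rightarrow> bool" where
  "DCP P \<longleftrightarrow> polyomino P \<and>
     (\<forall>n a b c. (a, n - a) \<in> P \<longrightarrow> (c, n - c) \<in> P \<longrightarrow> a \<le> b \<longrightarrow> b \<le> c
        \<longrightarrow> (b, n - b) \<in> P)"

definition diags :: "cell set \<Rightarrow> int set" where
  "diags P = {n. \<exists>(i, j)\<in>P. i + j = n}"

definition di :: "cell set \<Rightarrow> nat" where
  "di P = card (diags P)"

definition pe :: "cell set \<Rightarrow> nat" where
  "pe P = card {(c, c'). c \<in> P \<and> c' \<notin> P \<and> adj c c'}"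

definition lastdiag_index :: "cell set \<Rightarrow> int" where
  "lastdiag_index P = Max (diags P)"

definition la :: "cell set \<Rightarrow> nat" where
  "la P = card {(i, j) \<in> P. i + j = lastdiag_index P}"

definition nose_ia :: "cell set \<Rightarrow> int" where
  "nose_ia P = Min {i. (i, lastdiag_index P - 1 - i) \<in> P}"

definition nose_ib :: "cell set \<Rightarrow> int" where
  "nose_ib P = Max {i. (i, lastdiag_index P - 1 - i) \<in> P}"

definition nose_left :: "cell set \<Rightarrow> bool" where
  "nose_left P \<longleftrightarrow> (nose_ia P, lastdiag_index P - 1 - nose_ia P + 1) \<in> P"

definition nose_right :: "cell set \<Rightarrow> bool" where
  "nose_right P \<longleftrightarrow> (nose_ib P + 1, lastdiag_index P - 1 - nose_ib P) \<in> P"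

definition noses :: "cell set \<Rightarrow> nat" where
  "noses P = (if nose_left P then 1 else 0) + (if nose_right P then 1 else 0)"

definition dcp_count :: "nat \<Rightarrow> nat \<Rightarrow> nat \<Rightarrow> nat \<Rightarrow> nat" where
  "dcp_count k n p l = card {P. DCP P \<and> normalized P \<and> di P \<ge> 2 \<and> noses P = k \<and>
       di P = n \<and> pe P = p \<and> la P = l}"

text \<open>Trivariate formal power series in d, x, z: outer variable z, middle x, inner d.\<close>
definition GF :: "nat \<Rightarrow> rat fps fps fps" where
  "GF k = Abs_fps (\<lambda>l. Abs_fps (\<lambda>p. Abs_fps (\<lambda>n. of_nat (dcp_count k n p l))))"

definition Zv :: "rat fps fps fps" where "Zv = fps_X"
definition Xv :: "rat fps fps fps" where "Xv = fps_const fps_X"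
definition Dv :: "rat fps fps fps" where "Dv = fps_const (fps_const fps_X)"

definition Agf :: "rat fps fps fps" where "Agf = GF 2"
definition Bgf :: "rat fps fps fps" where "Bgf = GF 1"
definition Cgf :: "rat fps fps fps" where "Cgf = GF 0"

end

theory Submission
  imports Defs
begin

text \<open>
  Let \<open>P\<close> be a DCP with two noses and at least three diagonals. Removing its last diagonal
  together with those cells of the second-to-last diagonal that have no neighbour on the diagonal
  before leaves a DCP \<open>Q\<close> with one diagonal fewer, whose last diagonal is an interval
  \<open>[c\<^sub>1, c\<^sub>2]\<close>. Conversely \<open>P\<close> is recovered from \<open>Q\<close> by extending that last diagonal
  to \<open>[c\<^sub>1 - e\<^sub>l, c\<^sub>2 + e\<^sub>r]\<close> and adding the new last diagonal \<open>[c\<^sub>1 - e\<^sub>l, c\<^sub>2 + e\<^sub>r + 1]\<close>;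
  here \<open>e\<^sub>l > 0\<close> is possible exactly when \<open>Q\<close> has a left nose, and \<open>e\<^sub>r > 0\<close> exactly when it has
  a right nose. This adds one diagonal, \<open>4 + 4(e\<^sub>l + e\<^sub>r)\<close> to the perimeter and
  \<open>1 + e\<^sub>l + e\<^sub>r\<close> to the last diagonal. Summing over \<open>i = e\<^sub>l + e\<^sub>r\<close>, a two-nosed \<open>Q\<close> admits
  \<open>i + 1\<close> choices, a one-nosed \<open>Q\<close> one choice, a nose-free \<open>Q\<close> only \<open>i = 0\<close>; this gives the
  factors \<open>(1 - x\<^sup>4z)\<^sup>-\<^sup>2\<close>, \<open>(1 - x\<^sup>4z)\<^sup>-\<^sup>1\<close> and \<open>1\<close>. The two-nosed DCPs with exactly two
  diagonals are the bars of \<open>w\<close> and \<open>w + 1\<close> cells, \<open>w \<ge> 1\<close>, which give the first term.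
\<close>

section \<open>Adjacency and edge connectivity\<close>

lemma adj_iff: "adj (i, j) c \<longleftrightarrow> c = (i + 1, j) \<or> c = (i - 1, j) \<or> c = (i, j + 1) \<or> c = (i, j - 1)"
  by (cases c) (auto simp: adj_def abs_if split: if_splits)

lemma adj_sym: "adj c c' \<longleftrightarrow> adj c' c"
  by (auto simp: adj_def abs_minus_commute)

lemma adj_fst_dist: "adj c c' \<Longrightarrow> \<bar>fst c - fst c'\<bar> \<le> 1"
  by (cases c) (auto simp: adj_iff)

definition inner_adj :: "cell set \<Rightarrow> (cell \<times> cell) set" where
  "inner_adj P = {(c, c'). c \<in> P \<and> c' \<in> P \<and> adj c c'}"

lemma edge_connected_iff: "edge_connected P \<longleftrightarrow> (\<forall>a\<in>P. \<forall>b\<in>P. (a, b) \<in> (inner_adj P)\<^sup>*)"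
  by (simp add: edge_connected_def inner_adj_def)

lemma inner_adj_rtrancl_sym: "(a, b) \<in> (inner_adj P)\<^sup>* \<Longrightarrow> (b, a) \<in> (inner_adj P)\<^sup>*"
proof -
  have "sym (inner_adj P)" by (auto simp: sym_def inner_adj_def adj_sym)
  moreover assume "(a, b) \<in> (inner_adj P)\<^sup>*"
  ultimately show ?thesis by (metis rtrancl_converseI sym_conv_converse_eq)
qed

lemma inner_adj_rtrancl_mono: "P \<subseteq> P' \<Longrightarrow> (a, b) \<in> (inner_adj P)\<^sup>* \<Longrightarrow> (a, b) \<in> (inner_adj P')\<^sup>*"
  by (rule rtrancl_mono[THEN subsetD, rotated]) (auto simp: inner_adj_def)

lemma inner_adj_rtranclI: "a \<in> P \<Longrightarrow> b \<in> P \<Longrightarrow> adj a b \<Longrightarrow> (a, b) \<in> (inner_adj P)\<^sup>*"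
  by (auto simp: inner_adj_def)

lemma edge_connected_has_adj:
  assumes "edge_connected P" "a \<in> P" "b \<in> P" "a \<noteq> b"
  shows "\<exists>c\<in>P. adj a c"
proof -
  have "(a, b) \<in> (inner_adj P)\<^sup>*" using assms by (simp add: edge_connected_iff)
  then show ?thesis using assms(4)
    by (cases rule: converse_rtranclE) (auto simp: inner_adj_def)
qed

lemma edge_connected_crossing_adj:
  assumes "edge_connected P" "a \<in> P" "a \<in> X" "b \<in> P" "b \<notin> X"
  shows "\<exists>x\<in>P \<inter> X. \<exists>y\<in>P - X. adj x y"
proof -
  have "(a, b) \<in> (inner_adj P)\<^sup>*" using assms by (simp add: edge_connected_iff)
  then show ?thesis using assms(3,5)
    by (induction rule: rtrancl_induct) (auto simp: inner_adj_def)
qed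

lemma edge_connected_retract:
  assumes "edge_connected P" "Q \<subseteq> P" "\<And>q. q \<in> Q \<Longrightarrow> r q = q"
    "\<And>c c'. c \<in> P \<Longrightarrow> c' \<in> P \<Longrightarrow> adj c c' \<Longrightarrow> (r c, r c') \<in> (inner_adj Q)\<^sup>*"
  shows "edge_connected Q"
  unfolding edge_connected_iff
proof (intro ballI)
  fix a b assume ab: "a \<in> Q" "b \<in> Q"
  then have "(a, b) \<in> (inner_adj P)\<^sup>*" using assms(1,2) by (auto simp: edge_connected_iff)
  then have "(r a, r b) \<in> (inner_adj Q)\<^sup>*"
  proof (induction rule: rtrancl_induct)
    case (step y z)
    then have "(r y, r z) \<in> (inner_adj Q)\<^sup>*" using assms(4) by (auto simp: inner_adj_def)
    then show ?case using step.IH by (meson rtrancl_trans)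
  qed simp
  then show "(a, b) \<in> (inner_adj Q)\<^sup>*" using assms(3) ab by simp
qed

lemma edge_connected_image:
  assumes "edge_connected P" "\<And>c c'. adj c c' \<Longrightarrow> adj (f c) (f c')"
  shows "edge_connected (f ` P)"
  unfolding edge_connected_iff
proof (intro ballI)
  fix a b assume "a \<in> f ` P" "b \<in> f ` P"
  then obtain a0 b0 where ab: "a0 \<in> P" "a = f a0" "b0 \<in> P" "b = f b0" by auto
  have "(a0, b0) \<in> (inner_adj P)\<^sup>*" using assms(1) ab by (simp add: edge_connected_iff)
  then have "(f a0, f b0) \<in> (inner_adj (f ` P))\<^sup>*"
  proof (induction rule: rtrancl_induct)
    case (step y z)
    then have "(f y, f z) \<in> inner_adj (f ` P)" using assms(2) by (auto simp: inner_adj_def)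
    then show ?case using step.IH by (meson rtrancl_into_rtrancl)
  qed simp
  then show "(a, b) \<in> (inner_adj (f ` P))\<^sup>*" using ab by simp
qed

section \<open>Perimeter\<close>

lemma adj_set_eq: "{c'. adj c c'} = {(fst c + 1, snd c), (fst c - 1, snd c), (fst c, snd c + 1), (fst c, snd c - 1)}"
  using adj_iff[of "fst c" "snd c"] by auto

lemma finite_adj_set: "finite {c'. adj c c'}"
  unfolding adj_set_eq by auto

lemma card_adj_set: "card {c'. adj c c'} = 4"
  unfolding adj_set_eq by (auto simp: card_insert_if)

lemma finite_inner_adj: "finite P \<Longrightarrow> finite (inner_adj P)"
  by (rule finite_subset[of _ "P \<times> P"]) (auto simp: inner_adj_def)

text \<open>Each cell has four neighbours; each of the resulting ordered pairs is either a boundary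
  edge or an adjacency inside \<open>P\<close>.\<close>

lemma pe_add_card_inner_adj:
  assumes "finite P"
  shows "pe P + card (inner_adj P) = 4 * card P"
proof -
  let ?E = "{(c, c'). c \<in> P \<and> c' \<notin> P \<and> adj c c'}"
  have u: "?E \<union> inner_adj P = Sigma P (\<lambda>c. {c'. adj c c'})" by (auto simp: inner_adj_def)
  have fs: "finite (Sigma P (\<lambda>c. {c'. adj c c'}))" using assms finite_adj_set by auto
  have "card (Sigma P (\<lambda>c. {c'. adj c c'})) = 4 * card P"
    using assms by (simp add: card_SigmaI finite_adj_set card_adj_set)
  moreover have "card (?E \<union> inner_adj P) = card ?E + card (inner_adj P)"
    by (rule card_Un_disjoint) (use fs u in \<open>auto simp: inner_adj_def intro: finite_subset\<close>)
  ultimately show ?thesis unfolding pe_def using u by simp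
qed

definition adj_pairs :: "cell set \<Rightarrow> cell set \<Rightarrow> (cell \<times> cell) set" where
  "adj_pairs A B = {(a, b). a \<in> A \<and> b \<in> B \<and> adj a b}"

lemma card_adj_pairs_swap: "card (adj_pairs B A) = card (adj_pairs A B)"
proof -
  have "adj_pairs B A = prod.swap ` adj_pairs A B" by (auto simp: adj_pairs_def adj_sym image_iff)
  then show ?thesis by (simp add: card_image)
qed

lemma card_inner_adj_Un:
  assumes "finite A" "finite B" "A \<inter> B = {}"
  shows "card (inner_adj (A \<union> B)) = card (inner_adj A) + card (inner_adj B) + 2 * card (adj_pairs A B)"
proof -
  have e: "inner_adj (A \<union> B) = (inner_adj A \<union> inner_adj B) \<union> (adj_pairs A B \<union> adj_pairs B A)"
    by (auto simp: inner_adj_def adj_pairs_def)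
  have f: "finite (adj_pairs A B)" "finite (adj_pairs B A)"
    using assms by (auto intro: finite_subset[of _ "A \<times> B"] finite_subset[of _ "B \<times> A"] simp: adj_pairs_def)
  have "card (inner_adj A \<union> inner_adj B) = card (inner_adj A) + card (inner_adj B)"
    by (rule card_Un_disjoint) (use assms finite_inner_adj in \<open>auto simp: inner_adj_def\<close>)
  moreover have "card (adj_pairs A B \<union> adj_pairs B A) = card (adj_pairs A B) + card (adj_pairs B A)"
    by (rule card_Un_disjoint) (use assms f in \<open>auto simp: adj_pairs_def\<close>)
  moreover have "card ((inner_adj A \<union> inner_adj B) \<union> (adj_pairs A B \<union> adj_pairs B A)) =
     card (inner_adj A \<union> inner_adj B) + card (adj_pairs A B \<union> adj_pairs B A)"
    by (rule card_Un_disjoint)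
      (use assms f finite_inner_adj in \<open>auto simp: adj_pairs_def inner_adj_def\<close>)
  ultimately show ?thesis using e card_adj_pairs_swap[of B A] by simp
qed

lemma pe_image:
  assumes "bij f" "\<And>c c'. adj (f c) (f c') \<longleftrightarrow> adj c c'"
  shows "pe (f ` P) = pe P"
proof -
  let ?E = "\<lambda>P. {(c, c'). c \<in> P \<and> c' \<notin> P \<and> adj c c'}"
  have inj: "inj f" using assms(1) by (rule bij_is_inj)
  have "?E (f ` P) = map_prod f f ` ?E P"
  proof (intro set_eqI iffI)
    fix e assume "e \<in> ?E (f ` P)"
    then obtain c c' where e: "e = (f c, f c')" "c \<in> P" "f c' \<notin> f ` P" "adj (f c) (f c')"
      using bij_pointE[OF assms(1)] by (auto simp: image_iff) metis
    then show "e \<in> map_prod f f ` ?E P" using assms(2) by (auto intro!: image_eqI[of _ _ "(c, c')"])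
  qed (use assms(2) inj in \<open>auto simp: inj_image_mem_iff dest: injD\<close>)
  moreover have "inj (map_prod f f)" using inj by (auto simp: inj_def)
  ultimately show ?thesis unfolding pe_def by (simp add: card_image inj_on_subset)
qed

section \<open>Diagonals\<close>

definition diag :: "cell set \<Rightarrow> int \<Rightarrow> int set" where
  "diag P k = {i. (i, k - i) \<in> P}"

definition dcell :: "int \<Rightarrow> int \<Rightarrow> cell" where
  "dcell k i = (i, k - i)"

definition diag_convex :: "cell set \<Rightarrow> bool" where
  "diag_convex P \<longleftrightarrow> (\<forall>k a b c. a \<in> diag P k \<longrightarrow> c \<in> diag P k \<longrightarrow> a \<le> b \<longrightarrow> b \<le> c \<longrightarrow> b \<in> diag P k)"

lemma DCP_iff: "DCP P \<longleftrightarrow> finite P \<and> P \<noteq> {} \<and> edge_connected P \<and> diag_convex P"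
  by (simp add: DCP_def polyomino_def diag_convex_def diag_def)

lemma diag_convexD: "diag_convex P \<Longrightarrow> a \<in> diag P k \<Longrightarrow> c \<in> diag P k \<Longrightarrow> a \<le> b \<Longrightarrow> b \<le> c \<Longrightarrow> b \<in> diag P k"
  unfolding diag_convex_def by blast

lemma dcell_eq_iff [simp]: "dcell k i = dcell k' j \<longleftrightarrow> k = k' \<and> i = j"
  by (auto simp: dcell_def)

lemma dcell_components [simp]: "fst (dcell k i) = i" "snd (dcell k i) = k - i"
  by (simp_all add: dcell_def)

lemma dcell_cases: obtains k i where "c = dcell k i"
  using that[of "fst c + snd c" "fst c"] by (cases c) (simp add: dcell_def)

lemma dcell_in_iff: "dcell k i \<in> P \<longleftrightarrow> i \<in> diag P k"
  by (simp add: dcell_def diag_def)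

lemma dcell_in_image_iff [simp]: "dcell k i \<in> dcell m ` S \<longleftrightarrow> k = m \<and> i \<in> S"
  by auto

lemma adj_dcell: "adj (dcell m i) (dcell k j) \<longleftrightarrow> (k = m + 1 \<and> (j = i \<or> j = i + 1)) \<or> (k = m - 1 \<and> (j = i \<or> j = i - 1))"
  unfolding dcell_def adj_iff by auto

lemma adj_dcellD:
  "adj (dcell m i) c \<Longrightarrow> c = dcell (m + 1) i \<or> c = dcell (m + 1) (i + 1) \<or> c = dcell (m - 1) i \<or> c = dcell (m - 1) (i - 1)"
  by (cases c rule: dcell_cases) (auto simp: adj_dcell)

lemma Min_Icc_int: "x \<le> y \<Longrightarrow> Min {x..y::int} = x"
  by (rule Min_eqI) auto

lemma Max_Icc_int: "x \<le> y \<Longrightarrow> Max {x..y::int} = y"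
  by (rule Max_eqI) auto

lemma int_set_eq_Icc:
  fixes S :: "int set"
  assumes "finite S" "S \<noteq> {}" "\<And>x y z. x \<in> S \<Longrightarrow> z \<in> S \<Longrightarrow> x \<le> y \<Longrightarrow> y \<le> z \<Longrightarrow> y \<in> S"
  shows "S = {Min S..Max S}"
proof (intro set_eqI iffI)
  fix y
  show "y \<in> S \<Longrightarrow> y \<in> {Min S..Max S}" using assms(1) by simp
  show "y \<in> {Min S..Max S} \<Longrightarrow> y \<in> S" using assms(3)[OF Min_in[OF assms(1,2)] Max_in[OF assms(1,2)]] by simp
qed

lemma finite_diag: "finite P \<Longrightarrow> finite (diag P k)"
proof -
  have "diag P k = fst ` (P \<inter> {c. fst c + snd c = k})" by (force simp: diag_def image_iff)
  then show "finite P \<Longrightarrow> ?thesis" by simp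
qed

lemma diag_eq_Icc:
  assumes "diag_convex P" "finite P" "diag P k \<noteq> {}"
  shows "diag P k = {Min (diag P k)..Max (diag P k)}"
  by (rule int_set_eq_Icc[OF finite_diag[OF assms(2)] assms(3)]) (rule diag_convexD[OF assms(1)])

lemma finite_diags: "finite P \<Longrightarrow> finite (diags P)"
proof -
  have "diags P = (\<lambda>c. fst c + snd c) ` P" by (force simp: diags_def image_iff)
  then show "finite P \<Longrightarrow> ?thesis" by simp
qed

lemma diag_index_in_diags: "c \<in> P \<Longrightarrow> fst c + snd c \<in> diags P"
  by (cases c) (auto simp: diags_def)

lemma mem_diags_iff: "k \<in> diags P \<longleftrightarrow> diag P k \<noteq> {}"
proof
  assume "k \<in> diags P"
  then obtain i j where "(i, j) \<in> P" "i + j = k" by (auto simp: diags_def)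
  then have "i \<in> diag P k" by (auto simp: diag_def algebra_simps)
  then show "diag P k \<noteq> {}" by auto
next
  assume "diag P k \<noteq> {}"
  then obtain i where "(i, k - i) \<in> P" by (auto simp: diag_def)
  then show "k \<in> diags P" using diag_index_in_diags by fastforce
qed

lemma le_lastdiag_index: "finite P \<Longrightarrow> c \<in> P \<Longrightarrow> fst c + snd c \<le> lastdiag_index P"
  unfolding lastdiag_index_def by (rule Max_ge) (auto simp: finite_diags diag_index_in_diags)

lemma lastdiag_index_in_diags: "finite P \<Longrightarrow> P \<noteq> {} \<Longrightarrow> lastdiag_index P \<in> diags P"
  unfolding lastdiag_index_def by (rule Max_in) (auto simp: finite_diags dest: diag_index_in_diags)

lemma diag_last_nonempty: "finite P \<Longrightarrow> P \<noteq> {} \<Longrightarrow> diag P (lastdiag_index P) \<noteq> {}"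
  using lastdiag_index_in_diags mem_diags_iff by blast

lemma diag_beyond_last:
  assumes "finite P" "lastdiag_index P < k"
  shows "diag P k = {}"
proof -
  have "i \<notin> diag P k" for i
    using le_lastdiag_index[OF assms(1), of "dcell k i"] assms(2) by (auto simp: dcell_in_iff)
  then show ?thesis by blast
qed

lemma lastdiag_indexI:
  "finite P \<Longrightarrow> m \<in> diags P \<Longrightarrow> (\<And>c. c \<in> P \<Longrightarrow> fst c + snd c \<le> m) \<Longrightarrow> lastdiag_index P = m"
  unfolding lastdiag_index_def by (rule Max_eqI) (auto simp: finite_diags diags_def)

lemma la_eq_card_diag: "la P = card (diag P (lastdiag_index P))"
proof -
  let ?m = "lastdiag_index P"
  have "{(i, j) \<in> P. i + j = ?m} = dcell ?m ` diag P ?m"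
  proof (intro set_eqI)
    fix c
    obtain k i where c: "c = dcell k i" by (rule dcell_cases)
    show "c \<in> {(i, j) \<in> P. i + j = ?m} \<longleftrightarrow> c \<in> dcell ?m ` diag P ?m"
      unfolding c dcell_in_image_iff dcell_in_iff[symmetric] by (auto simp: dcell_def)
  qed
  then show ?thesis unfolding la_def by (simp add: card_image inj_on_def)
qed

lemma nose_ia_eq_Min: "nose_ia P = Min (diag P (lastdiag_index P - 1))"
  by (simp add: nose_ia_def diag_def algebra_simps)

lemma nose_ib_eq_Max: "nose_ib P = Max (diag P (lastdiag_index P - 1))"
  by (simp add: nose_ib_def diag_def algebra_simps)

lemma nose_left_iff: "nose_left P \<longleftrightarrow> nose_ia P \<in> diag P (lastdiag_index P)"
  by (simp add: nose_left_def diag_def algebra_simps)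

lemma nose_right_iff: "nose_right P \<longleftrightarrow> nose_ib P + 1 \<in> diag P (lastdiag_index P)"
  by (simp add: nose_right_def diag_def algebra_simps)

lemma noses_eq_2_iff: "noses P = 2 \<longleftrightarrow> nose_left P \<and> nose_right P"
  by (simp add: noses_def)

lemma di_ge_2_other_cell:
  assumes "2 \<le> di P" "c \<in> P"
  obtains c' where "c' \<in> P" "c' \<noteq> c"
proof -
  have "P \<noteq> {c}" using assms(1) by (cases c) (auto simp: di_def diags_def)
  then show ?thesis using assms(2) that by blast
qed

lemma last_diag_supported:
  assumes "DCP P" "2 \<le> di P" "i \<in> diag P (lastdiag_index P)"
  shows "i \<in> diag P (lastdiag_index P - 1) \<or> i - 1 \<in> diag P (lastdiag_index P - 1)"
proof -
  let ?M = "lastdiag_index P"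
  have fin: "finite P" and ec: "edge_connected P" using assms(1) by (simp_all add: DCP_iff)
  have ci: "dcell ?M i \<in> P" using assms(3) by (simp add: dcell_in_iff)
  obtain c' where "c' \<in> P" "c' \<noteq> dcell ?M i" using di_ge_2_other_cell[OF assms(2) ci] .
  then obtain c where c: "c \<in> P" "adj (dcell ?M i) c" using edge_connected_has_adj[OF ec ci] by blast
  have "c \<noteq> dcell (?M + 1) i" "c \<noteq> dcell (?M + 1) (i + 1)"
    using le_lastdiag_index[OF fin c(1)] by auto
  then have "c = dcell (?M - 1) i \<or> c = dcell (?M - 1) (i - 1)" using adj_dcellD[OF c(2)] by blast
  then show ?thesis using c(1) by (auto simp: dcell_in_iff)
qed

lemma second_last_diag_eq:
  assumes "DCP P" "2 \<le> di P"
  shows "diag P (lastdiag_index P - 1) = {nose_ia P..nose_ib P}" "nose_ia P \<le> nose_ib P"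
proof -
  have fin: "finite P" and ne: "P \<noteq> {}" and cv: "diag_convex P" using assms(1) by (auto simp: DCP_iff)
  obtain i where "i \<in> diag P (lastdiag_index P)" using diag_last_nonempty[OF fin ne] by blast
  then have ne1: "diag P (lastdiag_index P - 1) \<noteq> {}" using last_diag_supported[OF assms] by blast
  then show eq: "diag P (lastdiag_index P - 1) = {nose_ia P..nose_ib P}"
    unfolding nose_ia_eq_Min nose_ib_eq_Max by (rule diag_eq_Icc[OF cv fin])
  show "nose_ia P \<le> nose_ib P" using ne1 unfolding eq by simp
qed

lemma last_diag_two_noses:
  assumes "DCP P" "2 \<le> di P" "noses P = 2"
  shows "diag P (lastdiag_index P) = {nose_ia P..nose_ib P + 1}"
proof (intro set_eqI iffI)
  fix i
  assume "i \<in> diag P (lastdiag_index P)"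
  then have "i \<in> diag P (lastdiag_index P - 1) \<or> i - 1 \<in> diag P (lastdiag_index P - 1)"
    by (rule last_diag_supported[OF assms(1,2)])
  then show "i \<in> {nose_ia P..nose_ib P + 1}" unfolding second_last_diag_eq(1)[OF assms(1,2)] by auto
next
  have cv: "diag_convex P" using assms(1) by (simp add: DCP_iff)
  fix i
  assume i: "i \<in> {nose_ia P..nose_ib P + 1}"
  have "nose_ia P \<in> diag P (lastdiag_index P)" "nose_ib P + 1 \<in> diag P (lastdiag_index P)"
    using assms(3) by (simp_all add: noses_eq_2_iff nose_left_iff nose_right_iff)
  then show "i \<in> diag P (lastdiag_index P)"
    using i diag_convexD[OF cv, of "nose_ia P" _ "nose_ib P + 1" i] by simp
qed

section \<open>Growing a DCP\<close>

definition last_lo :: "cell set \<Rightarrow> int" where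
  "last_lo Q = Min (diag Q (lastdiag_index Q))"

definition last_hi :: "cell set \<Rightarrow> int" where
  "last_hi Q = Max (diag Q (lastdiag_index Q))"

lemma last_diag_eq_Icc:
  assumes fin: "finite Q" and ne: "Q \<noteq> {}" and cv: "diag_convex Q"
  shows "diag Q (lastdiag_index Q) = {last_lo Q..last_hi Q}" "last_lo Q \<le> last_hi Q"
proof -
  have ne': "diag Q (lastdiag_index Q) \<noteq> {}" by (rule diag_last_nonempty[OF fin ne])
  then show eq: "diag Q (lastdiag_index Q) = {last_lo Q..last_hi Q}"
    unfolding last_lo_def last_hi_def by (rule diag_eq_Icc[OF cv fin])
  show "last_lo Q \<le> last_hi Q" using ne' unfolding eq by simp
qed

definition grow :: "cell set \<Rightarrow> nat \<Rightarrow> nat \<Rightarrow> cell set" where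
  "grow Q el er = Q \<union> dcell (lastdiag_index Q) ` {last_lo Q - int el .. last_hi Q + int er}
     \<union> dcell (lastdiag_index Q + 1) ` {last_lo Q - int el .. last_hi Q + int er + 1}"

text \<open>\<open>Q\<close> need not be connected: it suffices that each cell is connected to the last diagonal,
  which also covers a single diagonal.\<close>

locale growable =
  fixes Q :: "cell set" and el er :: nat
  assumes fin: "finite Q" and ne: "Q \<noteq> {}" and cv: "diag_convex Q"
    and reaches_last_diag: "\<And>q. q \<in> Q \<Longrightarrow>
      \<exists>i\<in>diag Q (lastdiag_index Q). (q, dcell (lastdiag_index Q) i) \<in> (inner_adj Q)\<^sup>*"
    and new_cells_not_adj: "\<And>q i. q \<in> Q \<Longrightarrow> i \<in> {last_lo Q - int el .. last_hi Q + int er}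
      \<Longrightarrow> i \<notin> diag Q (lastdiag_index Q) \<Longrightarrow> \<not> adj q (dcell (lastdiag_index Q) i)"
begin

abbreviation "m \<equiv> lastdiag_index Q"
abbreviation "a \<equiv> last_lo Q - int el"
abbreviation "b \<equiv> last_hi Q + int er"
abbreviation "P \<equiv> grow Q el er"

lemmas last_diag = last_diag_eq_Icc[OF fin ne cv]

lemma le_m: "q \<in> Q \<Longrightarrow> fst q + snd q \<le> m"
  using le_lastdiag_index fin by blast

lemma dcell_in_grow_iff:
  "dcell k i \<in> P \<longleftrightarrow> dcell k i \<in> Q \<or> (k = m \<and> i \<in> {a..b}) \<or> (k = m + 1 \<and> i \<in> {a..b + 1})"
  unfolding grow_def by simp

lemma diag_grow_iff:
  "i \<in> diag P k \<longleftrightarrow> i \<in> diag Q k \<or> (k = m \<and> a \<le> i \<and> i \<le> b) \<or> (k = m + 1 \<and> a \<le> i \<and> i \<le> b + 1)"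
  using dcell_in_grow_iff[of k i] by (simp add: dcell_in_iff)

lemma diag_grow_m: "diag P m = {a..b}"
  using last_diag diag_grow_iff[of _ m] by auto

lemma diag_grow_m1: "diag P (m + 1) = {a..b + 1}"
  using diag_beyond_last[OF fin, of "m + 1"] diag_grow_iff[of _ "m + 1"] by auto

lemma diag_grow_other: "k \<noteq> m \<Longrightarrow> k \<noteq> m + 1 \<Longrightarrow> diag P k = diag Q k"
  using diag_grow_iff[of _ k] by auto

lemma finite_grow: "finite P"
  using fin by (simp add: grow_def)

lemma subset_grow: "Q \<subseteq> P"
  by (auto simp: grow_def)

lemma diag_convex_grow: "diag_convex P"
  unfolding diag_convex_def
proof (intro allI impI)
  fix k x y z assume h: "x \<in> diag P k" "z \<in> diag P k" "x \<le> y" "y \<le> z"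
  consider "k = m" | "k = m + 1" | "k \<noteq> m" "k \<noteq> m + 1" by blast
  then show "y \<in> diag P k"
  proof cases
    case 3
    then show ?thesis using h diag_grow_other diag_convexD[OF cv] by metis
  qed (use h diag_grow_m diag_grow_m1 in auto)
qed

lemma lastdiag_index_grow: "lastdiag_index P = m + 1"
proof (rule lastdiag_indexI[OF finite_grow])
  show "m + 1 \<in> diags P" using diag_grow_m1 last_diag by (auto simp: mem_diags_iff)
  fix c assume "c \<in> P"
  moreover obtain k i where c: "c = dcell k i" by (rule dcell_cases)
  ultimately have "dcell k i \<in> Q \<or> k = m \<or> k = m + 1" using dcell_in_grow_iff by auto
  then show "fst c + snd c \<le> m + 1" using le_m[of "dcell k i"] c by auto
qed

lemma diags_grow: "diags P = insert (m + 1) (diags Q)"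
proof (rule set_eqI)
  fix k
  have "m \<in> diags Q" using lastdiag_index_in_diags fin ne by blast
  then consider "k = m" | "k = m + 1" | "k \<noteq> m" "k \<noteq> m + 1" by blast
  then show "k \<in> diags P \<longleftrightarrow> k \<in> insert (m + 1) (diags Q)"
  proof cases
    case 1 then show ?thesis using \<open>m \<in> diags Q\<close> diag_grow_m last_diag by (simp add: mem_diags_iff)
  next
    case 2 then show ?thesis using diag_grow_m1 last_diag by (simp add: mem_diags_iff)
  next
    case 3 then show ?thesis using diag_grow_other by (simp add: mem_diags_iff)
  qed
qed

lemma di_grow: "di P = di Q + 1"
proof -
  have "m + 1 \<notin> diags Q" using diag_beyond_last[OF fin, of "m + 1"] by (simp add: mem_diags_iff)
  then show ?thesis unfolding di_def diags_grow using finite_diags[OF fin] by simp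
qed

lemma la_grow: "la P = la Q + el + er + 1"
  unfolding la_eq_card_diag lastdiag_index_grow diag_grow_m1 last_diag(1) using last_diag(2) by simp

lemma nose_ia_grow: "nose_ia P = a"
  unfolding nose_ia_eq_Min lastdiag_index_grow using diag_grow_m last_diag(2) by (simp add: Min_Icc_int)

lemma nose_ib_grow: "nose_ib P = b"
  unfolding nose_ib_eq_Max lastdiag_index_grow using diag_grow_m last_diag(2) by (simp add: Max_Icc_int)

lemma noses_grow: "noses P = 2"
  using last_diag(2) unfolding noses_eq_2_iff nose_left_iff nose_right_iff nose_ia_grow nose_ib_grow
    lastdiag_index_grow diag_grow_m1 by simp

lemma top_connected: "a \<le> j \<Longrightarrow> j \<le> b + 1 \<Longrightarrow> (dcell (m + 1) j, dcell (m + 1) a) \<in> (inner_adj P)\<^sup>*"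
proof (induction j rule: int_ge_induct)
  case (step j)
  then have j: "a \<le> j" "j \<le> b" by auto
  then have "dcell (m + 1) (j + 1) \<in> P" "dcell m j \<in> P" "dcell (m + 1) j \<in> P"
    by (auto simp: dcell_in_grow_iff)
  then have "(dcell (m + 1) (j + 1), dcell m j) \<in> (inner_adj P)\<^sup>*" "(dcell m j, dcell (m + 1) j) \<in> (inner_adj P)\<^sup>*"
    by (auto intro!: inner_adj_rtranclI simp: adj_dcell)
  moreover have "(dcell (m + 1) j, dcell (m + 1) a) \<in> (inner_adj P)\<^sup>*" using step j by simp
  ultimately show ?case by (meson rtrancl_trans)
qed simp

lemma connected_to_top: "c \<in> P \<Longrightarrow> (c, dcell (m + 1) a) \<in> (inner_adj P)\<^sup>*"
proof -
  have m_conn: "(dcell m j, dcell (m + 1) a) \<in> (inner_adj P)\<^sup>*" if "a \<le> j" "j \<le> b" for j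
  proof -
    have "(dcell m j, dcell (m + 1) j) \<in> (inner_adj P)\<^sup>*"
      using that by (auto intro!: inner_adj_rtranclI simp: dcell_in_grow_iff adj_dcell)
    moreover have "(dcell (m + 1) j, dcell (m + 1) a) \<in> (inner_adj P)\<^sup>*" using top_connected[of j] that by simp
    ultimately show ?thesis by (meson rtrancl_trans)
  qed
  assume c: "c \<in> P"
  show ?thesis
  proof (cases "c \<in> Q")
    case True
    then obtain i where i: "i \<in> diag Q m" "(c, dcell m i) \<in> (inner_adj Q)\<^sup>*" using reaches_last_diag by blast
    then have "(c, dcell m i) \<in> (inner_adj P)\<^sup>*" using inner_adj_rtrancl_mono[OF subset_grow] by blast
    moreover have "(dcell m i, dcell (m + 1) a) \<in> (inner_adj P)\<^sup>*" using m_conn i(1) last_diag(1) by simp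
    ultimately show ?thesis by (meson rtrancl_trans)
  next
    case False
    then obtain i where "c = dcell m i \<and> i \<in> {a..b} \<or> c = dcell (m + 1) i \<and> i \<in> {a..b + 1}"
      using c unfolding grow_def by auto
    then show ?thesis using m_conn top_connected by auto
  qed
qed

lemma DCP_grow: "DCP P"
proof -
  have "edge_connected P"
    unfolding edge_connected_iff
    using connected_to_top inner_adj_rtrancl_sym by (meson rtrancl_trans)
  then show ?thesis using finite_grow subset_grow ne diag_convex_grow by (auto simp: DCP_iff)
qed

end

lemma card_dcell_image: "card (dcell m ` S) = card S"
  by (rule card_image) (auto simp: inj_on_def)

lemma inner_adj_dcell_image: "inner_adj (dcell m ` S) = {}"
  by (auto simp: inner_adj_def adj_dcell)

text \<open>Every cell \<open>dcell m i\<close> of \<open>X\<close> has exactly two neighbours \<open>dcell (m + 1) i\<close> and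
  \<open>dcell (m + 1) (i + 1)\<close> on a long enough interval of the next diagonal.\<close>

lemma card_adj_pairs_next_diag:
  fixes X :: "cell set" and S :: "int set" and m lo hi :: int
  assumes "\<And>x. x \<in> X \<Longrightarrow> fst x + snd x \<le> m"
    and "\<And>i. dcell m i \<in> X \<longleftrightarrow> i \<in> S" and "S \<subseteq> {lo..hi}" and "finite S"
  shows "card (adj_pairs X (dcell (m + 1) ` {lo..hi + 1})) = 2 * card S"
proof -
  let ?f1 = "\<lambda>i. (dcell m i, dcell (m + 1) i)" and ?f2 = "\<lambda>i. (dcell m i, dcell (m + 1) (i + 1))"
  have "adj_pairs X (dcell (m + 1) ` {lo..hi + 1}) = ?f1 ` S \<union> ?f2 ` S"
  proof (intro set_eqI iffI)
    fix p assume "p \<in> adj_pairs X (dcell (m + 1) ` {lo..hi + 1})"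
    then obtain x j where p: "p = (x, dcell (m + 1) j)" "x \<in> X" "adj x (dcell (m + 1) j)"
      by (auto simp: adj_pairs_def)
    obtain k i where x: "x = dcell k i" by (rule dcell_cases)
    have "k \<le> m" using assms(1)[OF p(2)] x by simp
    then have "k = m \<and> (j = i \<or> j = i + 1)" using p(3) unfolding x adj_dcell by auto
    then show "p \<in> ?f1 ` S \<union> ?f2 ` S" using p x assms(2) by auto
  next
    fix p assume "p \<in> ?f1 ` S \<union> ?f2 ` S"
    then show "p \<in> adj_pairs X (dcell (m + 1) ` {lo..hi + 1})"
      using assms(2,3) by (auto simp: adj_pairs_def adj_dcell)
  qed
  moreover have "card (?f1 ` S \<union> ?f2 ` S) = card (?f1 ` S) + card (?f2 ` S)"
    by (rule card_Un_disjoint) (use assms(4) in auto)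
  moreover have "card (?f1 ` S) = card S" "card (?f2 ` S) = card S"
    by (auto intro!: card_image simp: inj_on_def)
  ultimately show ?thesis by simp
qed

context growable
begin

abbreviation "E \<equiv> dcell m ` ({a..b} - {last_lo Q..last_hi Q})"
abbreviation "N \<equiv> dcell (m + 1) ` {a..b + 1}"

lemma grow_split: "P = Q \<union> (E \<union> N)" "Q \<inter> (E \<union> N) = {}" "E \<inter> N = {}"
proof -
  have "dcell m ` {last_lo Q..last_hi Q} \<subseteq> Q" using last_diag(1) by (auto simp: dcell_in_iff)
  then show "P = Q \<union> (E \<union> N)" unfolding grow_def by auto
  have "x \<notin> Q" if "x \<in> E \<union> N" for x
    using that last_diag(1) diag_beyond_last[OF fin, of "m + 1"] by (auto simp: dcell_in_iff)
  then show "Q \<inter> (E \<union> N) = {}" by blast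
qed auto

lemma pe_grow: "pe P = pe Q + 4 + 4 * (el + er)"
proof -
  have fEN: "finite E" "finite N" by auto
  have cE: "card E = el + er"
    using last_diag(2) by (simp add: card_dcell_image card_Diff_subset)
  have cP: "card P = card Q + (card E + card N)"
    using grow_split fin fEN by (simp add: card_Un_disjoint)
  have "card (inner_adj P) = card (inner_adj Q) + card (inner_adj (E \<union> N)) + 2 * card (adj_pairs Q (E \<union> N))"
    unfolding grow_split(1) by (rule card_inner_adj_Un) (use fin fEN grow_split in auto)
  moreover have "card (inner_adj (E \<union> N)) = 2 * card (adj_pairs E N)"
    using card_inner_adj_Un[OF fEN grow_split(3)] by (simp add: inner_adj_dcell_image)
  moreover have "adj_pairs Q (E \<union> N) = adj_pairs Q N"
    using new_cells_not_adj last_diag(1) by (auto simp: adj_pairs_def)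
  moreover have "card (adj_pairs Q N) = 2 * card {last_lo Q..last_hi Q}"
    by (rule card_adj_pairs_next_diag) (use le_m last_diag(1) in \<open>auto simp: dcell_in_iff\<close>)
  moreover have "card (adj_pairs E N) = 2 * card E"
    by (subst card_dcell_image, rule card_adj_pairs_next_diag) auto
  moreover have "card N = card {last_lo Q..last_hi Q} + el + er + 1"
    using last_diag(2) by (simp add: card_dcell_image)
  ultimately show ?thesis
    using pe_add_card_inner_adj[OF finite_grow] pe_add_card_inner_adj[OF fin] cP cE by simp
qed

end

lemma DCP_reaches_last_diag:
  assumes "DCP Q" "q \<in> Q"
  shows "\<exists>i\<in>diag Q (lastdiag_index Q). (q, dcell (lastdiag_index Q) i) \<in> (inner_adj Q)\<^sup>*"
proof -
  have fin: "finite Q" and ne: "Q \<noteq> {}" and ec: "edge_connected Q" using assms(1) by (auto simp: DCP_iff)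
  obtain i where "i \<in> diag Q (lastdiag_index Q)" using diag_last_nonempty[OF fin ne] by blast
  then show ?thesis using ec assms(2) by (auto simp: edge_connected_iff dcell_in_iff)
qed

lemma DCP_growableI:
  assumes "DCP Q" "\<And>q i. q \<in> Q \<Longrightarrow> i \<in> {last_lo Q - int el .. last_hi Q + int er}
      \<Longrightarrow> i \<notin> diag Q (lastdiag_index Q) \<Longrightarrow> \<not> adj q (dcell (lastdiag_index Q) i)"
  shows "growable Q el er"
  using assms DCP_reaches_last_diag by unfold_locales (auto simp: DCP_iff)

text \<open>An extension on a side is harmless exactly when \<open>Q\<close> has a nose on that side: the nose
  pins the end of the second-to-last diagonal to the end of the last one.\<close>

lemma growable_if_noses:
  assumes Q: "DCP Q" "2 \<le> di Q" and noses: "0 < el \<longrightarrow> nose_left Q" "0 < er \<longrightarrow> nose_right Q"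
  shows "growable Q el er"
proof (rule DCP_growableI[OF Q(1)])
  let ?m = "lastdiag_index Q"
  have "finite Q" "Q \<noteq> {}" "diag_convex Q" using Q(1) by (auto simp: DCP_iff)
  note L = last_diag_eq_Icc[OF this]
  have D1: "diag Q (?m - 1) = {nose_ia Q..nose_ib Q}" by (rule second_last_diag_eq(1)[OF Q])
  have lo: "nose_ia Q \<le> last_lo Q" and hi: "last_hi Q - 1 \<le> nose_ib Q"
    using last_diag_supported[OF Q, of "last_lo Q"] last_diag_supported[OF Q, of "last_hi Q"] L
    unfolding D1 by auto
  have nl: "0 < el \<Longrightarrow> last_lo Q \<le> nose_ia Q" and nr: "0 < er \<Longrightarrow> nose_ib Q + 1 \<le> last_hi Q"
    using noses L by (auto simp: nose_left_iff nose_right_iff)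
  fix q i
  assume q: "q \<in> Q" and i: "i \<in> {last_lo Q - int el..last_hi Q + int er}" "i \<notin> diag Q ?m"
  show "\<not> adj q (dcell ?m i)"
  proof
    assume "adj q (dcell ?m i)"
    then have "q = dcell (?m + 1) i \<or> q = dcell (?m + 1) (i + 1) \<or> q = dcell (?m - 1) i \<or> q = dcell (?m - 1) (i - 1)"
      using adj_dcellD adj_sym by blast
    moreover have "fst q + snd q \<le> ?m" using Q(1) q by (simp add: DCP_iff le_lastdiag_index)
    ultimately have "i \<in> {nose_ia Q..nose_ib Q} \<or> i - 1 \<in> {nose_ia Q..nose_ib Q}"
      using q unfolding D1[symmetric] by (auto simp: dcell_in_iff)
    then show False using i L lo hi nl nr by auto
  qed
qed

section \<open>Shrinking a two-nosed DCP\<close>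

definition supported_diag :: "cell set \<Rightarrow> int set" where
  "supported_diag P = {i \<in> diag P (lastdiag_index P - 1).
     i \<in> diag P (lastdiag_index P - 2) \<or> i - 1 \<in> diag P (lastdiag_index P - 2)}"

definition shrink :: "cell set \<Rightarrow> cell set" where
  "shrink P = {c \<in> P. fst c + snd c \<le> lastdiag_index P - 2} \<union> dcell (lastdiag_index P - 1) ` supported_diag P"

definition shrink_left :: "cell set \<Rightarrow> nat" where
  "shrink_left P = nat (Min (supported_diag P) - nose_ia P)"

definition shrink_right :: "cell set \<Rightarrow> nat" where
  "shrink_right P = nat (nose_ib P - Max (supported_diag P))"

definition clamp :: "int \<Rightarrow> int \<Rightarrow> int \<Rightarrow> int" where
  "clamp lo hi x = max lo (min hi x)"

locale two_nosed =
  fixes P :: "cell set"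
  assumes DCP: "DCP P" and di_ge_3: "3 \<le> di P" and two_noses: "noses P = 2"
begin

abbreviation "M \<equiv> lastdiag_index P"
abbreviation "K \<equiv> supported_diag P"
abbreviation "D1 \<equiv> diag P (M - 1)"
abbreviation "D2 \<equiv> diag P (M - 2)"
abbreviation "Q \<equiv> shrink P"

lemma fin: "finite P" and ne: "P \<noteq> {}" and cv: "diag_convex P" and ec: "edge_connected P"
  using DCP by (auto simp: DCP_iff)

lemma di_ge_2: "2 \<le> di P"
  using di_ge_3 by simp

lemmas D1_eq = second_last_diag_eq[OF DCP di_ge_2]
lemmas DM_eq = last_diag_two_noses[OF DCP di_ge_2 two_noses]

lemma le_M: "c \<in> P \<Longrightarrow> fst c + snd c \<le> M"
  using le_lastdiag_index fin by blast

lemma exists_low_cell: "\<exists>c\<in>P. fst c + snd c \<le> M - 2"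
proof (rule ccontr)
  assume "\<not> ?thesis"
  then have "diags P \<subseteq> {M - 1, M}" using le_M by (force simp: diags_def)
  then have "card (diags P) \<le> card {M - 1, M}" by (rule card_mono[rotated]) simp
  then show False using di_ge_3 by (simp add: di_def)
qed

text \<open>Connectivity forces an edge between the last two diagonals and the rest.\<close>

lemma supported_nonempty: "K \<noteq> {}"
proof -
  obtain x0 where x0: "x0 \<in> P" "fst x0 + snd x0 \<le> M - 2" using exists_low_cell by blast
  obtain i where "i \<in> diag P M" using diag_last_nonempty[OF fin ne] by blast
  then have y0: "dcell M i \<in> P" by (simp add: dcell_in_iff)
  obtain x y where xy: "x \<in> P" "fst x + snd x \<le> M - 2" "y \<in> P" "\<not> fst y + snd y \<le> M - 2" "adj x y"
    using edge_connected_crossing_adj[OF ec x0(1), of "{c. fst c + snd c \<le> M - 2}" "dcell M i"] x0 y0 by auto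
  obtain k j where x: "x = dcell k j" by (rule dcell_cases)
  obtain k' j' where y: "y = dcell k' j'" by (rule dcell_cases)
  have "k = M - 2" "k' = M - 1" "j' = j \<or> j' = j + 1"
    using xy(2,4,5) unfolding x y adj_dcell by auto
  then have "j' \<in> K" using xy(1,3) x y by (auto simp: supported_diag_def dcell_in_iff)
  then show ?thesis by blast
qed

lemma supported_subset: "K \<subseteq> D1"
  by (auto simp: supported_diag_def)

lemma finite_supported: "finite K"
  using supported_subset finite_diag[OF fin] by (rule finite_subset)

lemma supported_eq_Icc: "K = {Min K..Max K}"
proof (rule int_set_eq_Icc[OF finite_supported supported_nonempty])
  fix x y z assume h: "x \<in> K" "z \<in> K" "x \<le> y" "y \<le> z"
  have y1: "y \<in> D1" using diag_convexD[OF cv, of x "M - 1" z y] h supported_subset by auto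
  obtain x' where x': "x' \<in> D2" "x' = x \<or> x' = x - 1" using h(1) by (auto simp: supported_diag_def)
  obtain z' where z': "z' \<in> D2" "z' = z \<or> z' = z - 1" using h(2) by (auto simp: supported_diag_def)
  show "y \<in> K"
  proof (cases "y = x")
    case False
    then have "y - 1 \<in> D2" using diag_convexD[OF cv x'(1) z'(1), of "y - 1"] x' z' h by auto
    then show ?thesis using y1 by (simp add: supported_diag_def)
  qed (use h in simp)
qed

abbreviation "k1 \<equiv> Min K"
abbreviation "k2 \<equiv> Max K"

lemma k1_k2: "k1 \<le> k2" "nose_ia P \<le> k1" "k2 \<le> nose_ib P"
  using Min_in[OF finite_supported supported_nonempty] Max_in[OF finite_supported supported_nonempty]
    supported_subset D1_eq(1) Min_le[OF finite_supported] by auto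

lemma supported_step: "i \<in> K \<Longrightarrow> i + 1 \<in> K \<Longrightarrow> i \<in> D2"
  using diag_convexD[OF cv, of "i - 1" "M - 2" "i + 1" i] by (auto simp: supported_diag_def)

lemma dcell_in_shrink_iff: "dcell k i \<in> Q \<longleftrightarrow> (k \<le> M - 2 \<and> i \<in> diag P k) \<or> (k = M - 1 \<and> i \<in> K)"
  unfolding shrink_def Un_iff dcell_in_image_iff mem_Collect_eq by (auto simp: dcell_in_iff)

lemma diag_shrink_iff: "i \<in> diag Q k \<longleftrightarrow> (k \<le> M - 2 \<and> i \<in> diag P k) \<or> (k = M - 1 \<and> i \<in> K)"
  using dcell_in_shrink_iff by (simp add: dcell_in_iff)

lemma diag_shrink_last: "diag Q (M - 1) = K"
  using diag_shrink_iff[of _ "M - 1"] by auto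

lemma diag_shrink_low: "k \<le> M - 2 \<Longrightarrow> diag Q k = diag P k"
  using diag_shrink_iff[of _ k] by auto

lemma shrink_subset: "Q \<subseteq> P"
  using supported_subset by (auto simp: shrink_def dcell_in_iff)

lemma lastdiag_index_shrink: "lastdiag_index Q = M - 1"
proof (rule lastdiag_indexI)
  show "finite Q" using shrink_subset fin by (rule finite_subset)
  show "M - 1 \<in> diags Q" using supported_nonempty diag_shrink_last by (simp add: mem_diags_iff)
qed (auto simp: shrink_def)

lemma diag_convex_shrink: "diag_convex Q"
  unfolding diag_convex_def
proof (intro allI impI)
  fix k x y z assume h: "x \<in> diag Q k" "z \<in> diag Q k" "x \<le> y" "y \<le> z"
  show "y \<in> diag Q k"
  proof (cases "k \<le> M - 2")
    case True then show ?thesis using h diag_shrink_low diag_convexD[OF cv] by metis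
  next
    case False
    then have k: "k = M - 1" using h(1) diag_shrink_iff by auto
    then have "x \<in> K" "z \<in> K" using h diag_shrink_last by auto
    then have "y \<in> {k1..k2}" using h(3,4) Min_le[OF finite_supported] Max_ge[OF finite_supported] by fastforce
    then show ?thesis using k diag_shrink_last by (metis supported_eq_Icc)
  qed
qed

end

lemma clamp_mem: "lo \<le> hi \<Longrightarrow> clamp lo hi x \<in> {lo..hi}"
  by (auto simp: clamp_def)

lemma clamp_eq_self: "x \<in> {lo..hi} \<Longrightarrow> clamp lo hi x = x"
  by (auto simp: clamp_def)

lemma clamp_dist_le: "\<bar>clamp lo hi x - clamp lo hi y\<bar> \<le> \<bar>x - y\<bar>"
  by (auto simp: clamp_def)

context two_nosed
begin

lemma supported_adjacent_connected:
  assumes "i \<in> K" "j \<in> K" "\<bar>i - j\<bar> \<le> 1"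
  shows "(dcell (M - 1) i, dcell (M - 1) j) \<in> (inner_adj Q)\<^sup>*"
proof -
  have step: "(dcell (M - 1) i, dcell (M - 1) (i + 1)) \<in> (inner_adj Q)\<^sup>*" if "i \<in> K" "i + 1 \<in> K" for i
  proof -
    have "dcell (M - 2) i \<in> Q" "dcell (M - 1) i \<in> Q" "dcell (M - 1) (i + 1) \<in> Q"
      using supported_step that by (auto simp: dcell_in_shrink_iff)
    then have "(dcell (M - 1) i, dcell (M - 2) i) \<in> (inner_adj Q)\<^sup>*" "(dcell (M - 2) i, dcell (M - 1) (i + 1)) \<in> (inner_adj Q)\<^sup>*"
      by (auto intro!: inner_adj_rtranclI simp: adj_dcell)
    then show ?thesis by (meson rtrancl_trans)
  qed
  consider "j = i" | "j = i + 1" | "i = j + 1" using assms(3) by linarith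
  then show ?thesis
    by cases (use step assms(1,2) inner_adj_rtrancl_sym in auto)
qed

text \<open>Cells beyond the \<open>(M - 2)\<close>-th diagonal are moved into the supported interval of the
  \<open>(M - 1)\<close>-th one; clamping keeps the first coordinates of adjacent cells within distance one.\<close>

definition retraction :: "cell \<Rightarrow> cell" where
  "retraction c = (if fst c + snd c \<le> M - 2 then c else dcell (M - 1) (clamp k1 k2 (fst c)))"

lemma retraction_high:
  "\<not> fst c + snd c \<le> M - 2 \<Longrightarrow> retraction c = dcell (M - 1) (clamp k1 k2 (fst c)) \<and> clamp k1 k2 (fst c) \<in> K"
  using clamp_mem[OF k1_k2(1)] supported_eq_Icc by (simp add: retraction_def)

lemma retraction_fixes_shrink: "q \<in> Q \<Longrightarrow> retraction q = q"
proof -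
  assume q: "q \<in> Q"
  obtain k i where qi: "q = dcell k i" by (rule dcell_cases)
  show ?thesis
  proof (cases "k \<le> M - 2")
    case False
    then have "k = M - 1" "i \<in> K" using q qi dcell_in_shrink_iff by auto
    then show ?thesis using qi supported_eq_Icc clamp_eq_self[of i k1 k2] by (simp add: retraction_def)
  qed (simp add: qi retraction_def)
qed

lemma adj_low_in_shrink:
  assumes "c \<in> P" "c' \<in> P" "adj c c'" "fst c + snd c \<le> M - 2"
  shows "c \<in> Q" "c' \<in> Q"
proof -
  obtain k i where c: "c = dcell k i" by (rule dcell_cases)
  obtain k' j where c': "c' = dcell k' j" by (rule dcell_cases)
  have k: "k \<le> M - 2" "i \<in> diag P k" "j \<in> diag P k'" using assms c c' by (auto simp: dcell_in_iff)
  then show "c \<in> Q" unfolding c dcell_in_shrink_iff by simp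
  have adj: "(k' = k + 1 \<and> (j = i \<or> j = i + 1)) \<or> (k' = k - 1 \<and> (j = i \<or> j = i - 1))"
    using assms(3) unfolding c c' adj_dcell .
  show "c' \<in> Q"
  proof (cases "k' \<le> M - 2")
    case False
    with adj k have "k = M - 2" "k' = M - 1" "i = j \<or> i = j - 1" by auto
    then show ?thesis using k unfolding c' dcell_in_shrink_iff supported_diag_def by auto
  qed (use k in \<open>simp add: c' dcell_in_shrink_iff\<close>)
qed

lemma edge_connected_shrink: "edge_connected Q"
proof (rule edge_connected_retract[OF ec shrink_subset retraction_fixes_shrink])
  fix c c' assume cc: "c \<in> P" "c' \<in> P" "adj c c'"
  show "(retraction c, retraction c') \<in> (inner_adj Q)\<^sup>*"
  proof (cases "fst c + snd c \<le> M - 2 \<or> fst c' + snd c' \<le> M - 2")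
    case True
    then have "c \<in> Q" "c' \<in> Q"
      using adj_low_in_shrink[OF cc] adj_low_in_shrink[OF cc(2,1)] cc(3) adj_sym by blast+
    then show ?thesis using retraction_fixes_shrink cc(3) inner_adj_rtranclI by simp
  next
    case False
    have "\<bar>clamp k1 k2 (fst c) - clamp k1 k2 (fst c')\<bar> \<le> 1"
      using clamp_dist_le[of k1 k2 "fst c" "fst c'"] adj_fst_dist[OF cc(3)] by linarith
    then show ?thesis
      using False retraction_high[of c] retraction_high[of c'] supported_adjacent_connected by auto
  qed
qed

lemma DCP_shrink: "DCP Q"
  using shrink_subset fin supported_nonempty edge_connected_shrink diag_convex_shrink
  by (auto simp: DCP_iff shrink_def intro: finite_subset)

lemma last_lo_shrink: "last_lo Q = k1" and last_hi_shrink: "last_hi Q = k2"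
  unfolding last_lo_def last_hi_def lastdiag_index_shrink diag_shrink_last by simp_all

lemma nose_ia_shrink: "nose_ia Q = Min D2" and nose_ib_shrink: "nose_ib Q = Max D2"
  unfolding nose_ia_eq_Min nose_ib_eq_Max lastdiag_index_shrink using diag_shrink_low[of "M - 2"] by simp_all

text \<open>If \<open>P\<close> juts out to the left of the supported interval, the cell \<open>k\<^sub>1 - 1\<close> of the
  \<open>(M - 1)\<close>-th diagonal is unsupported, so the \<open>(M - 2)\<close>-th diagonal starts at \<open>k\<^sub>1\<close>: a left
  nose of \<open>Q\<close>.\<close>

lemma nose_left_shrink: "0 < shrink_left P \<Longrightarrow> nose_left Q"
proof -
  assume "0 < shrink_left P"
  then have "k1 - 1 \<in> D1" using k1_k2 D1_eq(1) by (auto simp: shrink_left_def)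
  moreover have "k1 - 1 \<notin> K" using Min_le[OF finite_supported, of "k1 - 1"] by auto
  ultimately have n: "k1 - 1 \<notin> D2" by (auto simp: supported_diag_def)
  have "k1 \<in> K" using finite_supported supported_nonempty by simp
  then have k1: "k1 \<in> D2" using n by (auto simp: supported_diag_def)
  have "Min D2 = k1"
  proof (rule Min_eqI[OF finite_diag[OF fin] _ k1])
    show "k1 \<le> x" if "x \<in> D2" for x
      using that diag_convexD[OF cv that k1, of "k1 - 1"] n by (cases "x \<le> k1 - 1") auto
  qed
  then show ?thesis
    unfolding nose_left_iff nose_ia_shrink lastdiag_index_shrink diag_shrink_last using \<open>k1 \<in> K\<close> by simp
qed

lemma nose_right_shrink: "0 < shrink_right P \<Longrightarrow> nose_right Q"
proof -
  assume "0 < shrink_right P"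
  then have "k2 + 1 \<in> D1" using k1_k2 D1_eq(1) by (auto simp: shrink_right_def)
  moreover have "k2 + 1 \<notin> K" using Max_ge[OF finite_supported, of "k2 + 1"] by auto
  ultimately have n: "k2 + 1 \<notin> D2" "k2 \<notin> D2" by (auto simp: supported_diag_def)
  have "k2 \<in> K" using finite_supported supported_nonempty by simp
  then have k2: "k2 - 1 \<in> D2" using n by (auto simp: supported_diag_def)
  have "Max D2 = k2 - 1"
  proof (rule Max_eqI[OF finite_diag[OF fin] _ k2])
    show "x \<le> k2 - 1" if "x \<in> D2" for x
      using that diag_convexD[OF cv k2 that, of k2] n by (cases "k2 \<le> x") auto
  qed
  then show ?thesis
    unfolding nose_right_iff nose_ib_shrink lastdiag_index_shrink diag_shrink_last using \<open>k2 \<in> K\<close> by simp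
qed

lemma shrink_left_eq: "k1 - int (shrink_left P) = nose_ia P"
  using k1_k2 by (simp add: shrink_left_def)

lemma shrink_right_eq: "k2 + int (shrink_right P) = nose_ib P"
  using k1_k2 by (simp add: shrink_right_def)

lemma growable_shrink: "growable Q (shrink_left P) (shrink_right P)"
proof (rule DCP_growableI[OF DCP_shrink])
  fix q i assume q: "q \<in> Q" and i: "i \<in> {last_lo Q - int (shrink_left P)..last_hi Q + int (shrink_right P)}"
    "i \<notin> diag Q (lastdiag_index Q)"
  have "i \<in> D1" "i \<notin> K"
    using i unfolding last_lo_shrink last_hi_shrink shrink_left_eq shrink_right_eq D1_eq(1)
      lastdiag_index_shrink diag_shrink_last by auto
  then have n: "i \<notin> D2" "i - 1 \<notin> D2" by (auto simp: supported_diag_def)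
  have "fst q + snd q \<le> M - 1" using q by (auto simp: shrink_def)
  show "\<not> adj q (dcell (lastdiag_index Q) i)"
  proof
    assume "adj q (dcell (lastdiag_index Q) i)"
    then have "q = dcell M i \<or> q = dcell M (i + 1) \<or> q = dcell (M - 2) i \<or> q = dcell (M - 2) (i - 1)"
      using adj_dcellD[of "M - 1" i q] adj_sym unfolding lastdiag_index_shrink by (simp add: algebra_simps)
    then show False using q n \<open>fst q + snd q \<le> M - 1\<close> by (auto simp: dcell_in_shrink_iff)
  qed
qed

lemma grow_shrink: "grow Q (shrink_left P) (shrink_right P) = P"
proof (rule set_eqI)
  fix c
  obtain k i where c: "c = dcell k i" by (rule dcell_cases)
  have "c \<in> grow Q (shrink_left P) (shrink_right P) \<longleftrightarrow>
      dcell k i \<in> Q \<or> (k = M - 1 \<and> i \<in> {nose_ia P..nose_ib P}) \<or> (k = M \<and> i \<in> {nose_ia P..nose_ib P + 1})"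
    unfolding c grow_def Un_iff dcell_in_image_iff lastdiag_index_shrink last_lo_shrink last_hi_shrink
      shrink_left_eq shrink_right_eq by simp
  moreover have "c \<in> P \<longleftrightarrow>
      dcell k i \<in> Q \<or> (k = M - 1 \<and> i \<in> {nose_ia P..nose_ib P}) \<or> (k = M \<and> i \<in> {nose_ia P..nose_ib P + 1})"
  proof -
    consider "k \<le> M - 2" | "k = M - 1" | "k = M" | "M < k" by linarith
    then show ?thesis
      unfolding c dcell_in_shrink_iff
      by cases (use D1_eq DM_eq supported_subset diag_beyond_last[OF fin, of k] in \<open>auto simp: dcell_in_iff\<close>)
  qed
  ultimately show "c \<in> grow Q (shrink_left P) (shrink_right P) \<longleftrightarrow> c \<in> P" by blast
qed

end

lemma (in growable) supported_diag_grow: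
  assumes "DCP Q" "2 \<le> di Q"
  shows "supported_diag P = {last_lo Q..last_hi Q}"
proof -
  have e: "m + 1 - 1 = m" "m + 1 - 2 = m - 1" by simp_all
  have D2: "diag P (m - 1) = diag Q (m - 1)" by (rule diag_grow_other) simp_all
  show ?thesis
  proof (intro set_eqI iffI)
    fix i assume "i \<in> supported_diag P"
    then have i: "i \<in> {a..b}" "i \<in> diag Q (m - 1) \<or> i - 1 \<in> diag Q (m - 1)"
      unfolding supported_diag_def lastdiag_index_grow e diag_grow_m D2 by auto
    show "i \<in> {last_lo Q..last_hi Q}"
    proof (rule ccontr)
      assume "i \<notin> {last_lo Q..last_hi Q}"
      then have "\<not> adj q (dcell m i)" if "q \<in> Q" for q
        using new_cells_not_adj[OF that] i(1) last_diag(1) by simp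
      moreover have "adj (dcell (m - 1) i) (dcell m i)" "adj (dcell (m - 1) (i - 1)) (dcell m i)"
        by (simp_all add: adj_dcell)
      ultimately show False using i(2) unfolding dcell_in_iff[symmetric] by blast
    qed
  next
    fix i assume "i \<in> {last_lo Q..last_hi Q}"
    then show "i \<in> supported_diag P"
      using last_diag_supported[OF assms, of i] last_diag
      unfolding supported_diag_def lastdiag_index_grow e diag_grow_m D2 by auto
  qed
qed

lemma (in growable) shrink_grow:
  assumes "DCP Q" "2 \<le> di Q"
  shows "shrink P = Q" "shrink_left P = el" "shrink_right P = er"
proof -
  note supp = supported_diag_grow[OF assms]
  have mn: "Min (supported_diag P) = last_lo Q" "Max (supported_diag P) = last_hi Q"
    unfolding supp using last_diag(2) by (simp_all add: Min_Icc_int Max_Icc_int)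
  show "shrink_left P = el" unfolding shrink_left_def mn nose_ia_grow by simp
  show "shrink_right P = er" unfolding shrink_right_def mn nose_ib_grow by simp
  show "shrink P = Q"
  proof (rule set_eqI)
    fix c
    obtain k i where c: "c = dcell k i" by (rule dcell_cases)
    have "c \<in> shrink P \<longleftrightarrow> (dcell k i \<in> P \<and> k \<le> m - 1) \<or> (k = m \<and> i \<in> {last_lo Q..last_hi Q})"
      unfolding c shrink_def lastdiag_index_grow supp Un_iff dcell_in_image_iff mem_Collect_eq by simp
    also have "\<dots> \<longleftrightarrow> dcell k i \<in> Q"
    proof -
      consider "k \<le> m - 1" | "k = m" | "m < k" by linarith
      then show ?thesis
        by cases (use last_diag diag_beyond_last[OF fin, of k] dcell_in_grow_iff[of k i]
            in \<open>auto simp: dcell_in_iff\<close>)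
    qed
    finally show "c \<in> shrink P \<longleftrightarrow> c \<in> Q" unfolding c .
  qed
qed

section \<open>Anchored DCPs and the growth bijection\<close>

text \<open>Anchored representatives of translation classes: the first diagonal is the \<open>0\<close>-th one
  and its lowest cell is the origin.\<close>

definition anchored :: "cell set \<Rightarrow> bool" where
  "anchored P \<longleftrightarrow> (0, 0) \<in> P \<and> (\<forall>c\<in>P. 0 \<le> fst c + snd c \<and> (fst c + snd c = 0 \<longrightarrow> 0 \<le> fst c))"

definition anchored_dcps :: "nat \<Rightarrow> nat \<Rightarrow> nat \<Rightarrow> cell set set" where
  "anchored_dcps n p l = {P. DCP P \<and> anchored P \<and> 2 \<le> di P \<and> di P = n \<and> pe P = p \<and> la P = l}"

abbreviation anchored_dcps_noses :: "nat \<Rightarrow> nat \<Rightarrow> nat \<Rightarrow> nat \<Rightarrow> cell set set" where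
  "anchored_dcps_noses k n p l \<equiv> {P \<in> anchored_dcps n p l. noses P = k}"

lemma anchored_di_le:
  assumes "anchored P" "finite P"
  shows "di P \<le> nat (lastdiag_index P) + 1"
proof -
  have "diags P \<subseteq> {0..lastdiag_index P}"
    using assms le_lastdiag_index[OF assms(2)] by (force simp: anchored_def diags_def)
  then have "card (diags P) \<le> card {0..lastdiag_index P}" by (rule card_mono[rotated]) simp
  then show ?thesis by (simp add: di_def)
qed

lemma (in growable) anchored_grow:
  assumes Q: "anchored Q" and m: "0 < m \<or> el = 0"
  shows "anchored P"
proof -
  have m0: "0 \<le> m" using Q le_m[of "(0, 0)"] by (simp add: anchored_def)
  have lo: "0 \<le> last_lo Q" if "m = 0"
  proof -
    have "dcell m (last_lo Q) \<in> Q" using last_diag by (simp add: dcell_in_iff)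
    then show ?thesis using Q that by (auto simp: anchored_def)
  qed
  have "0 \<le> k \<and> (k = 0 \<longrightarrow> 0 \<le> i)" if ki: "dcell k i \<in> P" for k i
  proof -
    consider "dcell k i \<in> Q" | "k = m" "a \<le> i" | "k = m + 1"
      using ki by (auto simp: dcell_in_grow_iff)
    then show ?thesis
    proof cases
      case 1 then show ?thesis using Q by (auto simp: anchored_def)
    next
      case 2 then show ?thesis using m m0 lo by auto
    qed (use m0 in auto)
  qed
  note * = this
  show ?thesis
    unfolding anchored_def
  proof (intro conjI ballI)
    show "(0, 0) \<in> P" using Q subset_grow by (auto simp: anchored_def)
    fix c assume "c \<in> P"
    moreover obtain k i where "c = dcell k i" by (rule dcell_cases)
    ultimately show "0 \<le> fst c + snd c" "fst c + snd c = 0 \<longrightarrow> 0 \<le> fst c" using * by auto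
  qed
qed

lemma (in two_nosed) anchored_shrink:
  assumes "anchored P"
  shows "anchored Q"
proof -
  have "di P \<le> nat M + 1" using anchored_di_le[OF assms fin] .
  then have "2 \<le> M" using di_ge_3 by linarith
  then show ?thesis using assms shrink_subset by (auto simp: anchored_def shrink_def)
qed

definition grow_data :: "nat \<Rightarrow> nat \<Rightarrow> nat \<Rightarrow> (cell set \<times> nat \<times> nat) set" where
  "grow_data n p l = {(Q, el, er). Q \<in> anchored_dcps (n - 1) (p - 4 - 4 * (el + er)) (l - 1 - (el + er))
     \<and> 4 + 4 * (el + er) \<le> p \<and> el + er < l \<and> (0 < el \<longrightarrow> nose_left Q) \<and> (0 < er \<longrightarrow> nose_right Q)}"

lemma grow_data_iff:
  assumes "3 \<le> n"
  shows "(Q, el, er) \<in> grow_data n p l \<longleftrightarrow> DCP Q \<and> anchored Q \<and> 2 \<le> di Q \<and> di Q + 1 = n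
     \<and> pe Q + 4 + 4 * (el + er) = p \<and> la Q + el + er + 1 = l \<and> (0 < el \<longrightarrow> nose_left Q) \<and> (0 < er \<longrightarrow> nose_right Q)"
  using assms by (auto simp: grow_data_def anchored_dcps_def)

lemma bij_betw_grow:
  assumes n: "3 \<le> n"
  shows "bij_betw (\<lambda>(Q, el, er). grow Q el er) (grow_data n p l) (anchored_dcps_noses 2 n p l)"
proof (rule bij_betw_byWitness[where f' = "\<lambda>P. (shrink P, shrink_left P, shrink_right P)"])
  show "\<forall>x\<in>grow_data n p l. (\<lambda>P. (shrink P, shrink_left P, shrink_right P)) ((\<lambda>(Q, el, er). grow Q el er) x) = x"
  proof
    fix x assume x: "x \<in> grow_data n p l"
    obtain Q el er where Qx: "x = (Q, el, er)" by (cases x)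
    then have Q: "DCP Q" "2 \<le> di Q" "0 < el \<longrightarrow> nose_left Q" "0 < er \<longrightarrow> nose_right Q"
      using x grow_data_iff[OF n] by blast+
    show "(\<lambda>P. (shrink P, shrink_left P, shrink_right P)) ((\<lambda>(Q, el, er). grow Q el er) x) = x"
      using growable.shrink_grow[OF growable_if_noses[OF Q] Q(1,2)] Qx by simp
  qed
  show "\<forall>P\<in>anchored_dcps_noses 2 n p l. (\<lambda>(Q, el, er). grow Q el er) ((\<lambda>P. (shrink P, shrink_left P, shrink_right P)) P) = P"
    using n two_nosed.grow_shrink by (force simp: anchored_dcps_def two_nosed_def)
  show "(\<lambda>(Q, el, er). grow Q el er) ` grow_data n p l \<subseteq> anchored_dcps_noses 2 n p l"
  proof
    fix R assume "R \<in> (\<lambda>(Q, el, er). grow Q el er) ` grow_data n p l"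
    then obtain Q el er where R: "R = grow Q el er" and x: "(Q, el, er) \<in> grow_data n p l" by auto
    then have Q: "DCP Q" "2 \<le> di Q" "0 < el \<longrightarrow> nose_left Q" "0 < er \<longrightarrow> nose_right Q" "anchored Q"
      "di Q + 1 = n" "pe Q + 4 + 4 * (el + er) = p" "la Q + el + er + 1 = l"
      using grow_data_iff[OF n] by blast+
    interpret growable Q el er by (rule growable_if_noses[OF Q(1-4)])
    have "0 < m" using anchored_di_le[OF Q(5) fin] Q(2) by linarith
    then show "R \<in> anchored_dcps_noses 2 n p l"
      using anchored_grow DCP_grow di_grow noses_grow pe_grow la_grow Q R by (auto simp: anchored_dcps_def)
  qed
  show "(\<lambda>P. (shrink P, shrink_left P, shrink_right P)) ` anchored_dcps_noses 2 n p l \<subseteq> grow_data n p l"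
  proof
    fix x assume "x \<in> (\<lambda>P. (shrink P, shrink_left P, shrink_right P)) ` anchored_dcps_noses 2 n p l"
    then obtain P where x: "x = (shrink P, shrink_left P, shrink_right P)" and "P \<in> anchored_dcps_noses 2 n p l"
      by auto
    then have P: "DCP P" "anchored P" "di P = n" "noses P = 2" "pe P = p" "la P = l"
      by (auto simp: anchored_dcps_def)
    interpret two_nosed P using P n by unfold_locales auto
    interpret g: growable Q "shrink_left P" "shrink_right P" by (rule growable_shrink)
    have "di P = di Q + 1" "pe P = pe Q + 4 + 4 * (shrink_left P + shrink_right P)"
      "la P = la Q + shrink_left P + shrink_right P + 1"
      using g.di_grow g.pe_grow g.la_grow unfolding grow_shrink by simp_all
    then show "x \<in> grow_data n p l"
      using DCP_shrink anchored_shrink[OF P(2)] nose_left_shrink nose_right_shrink P n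
      unfolding x grow_data_iff[OF n] by auto
  qed
qed

section \<open>Finitely many anchored DCPs of given perimeter\<close>

lemma column_occupied:
  assumes ec: "edge_connected P" and z: "(0, 0) \<in> P" and c: "c \<in> P"
    and x: "min 0 (fst c) \<le> x" "x \<le> max 0 (fst c)"
  shows "x \<in> fst ` P"
proof (cases "x = 0 \<or> x = fst c")
  case True then show ?thesis using z c by force
next
  case False
  show ?thesis
  proof (cases "0 < fst c")
    case True
    then have "0 < x" "x < fst c" using x False by auto
    then obtain u v where uv: "u \<in> P \<inter> {d. fst d < x}" "v \<in> P - {d. fst d < x}" "adj u v"
      using edge_connected_crossing_adj[OF ec z, of "{d. fst d < x}" c] c by auto
    then have "fst v = x" using adj_fst_dist[OF uv(3)] by auto
    then show ?thesis using uv by force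
  next
    case False2: False
    then have "x < 0" "fst c < x" using x False by auto
    then obtain u v where uv: "u \<in> P \<inter> {d. x < fst d}" "v \<in> P - {d. x < fst d}" "adj u v"
      using edge_connected_crossing_adj[OF ec z, of "{d. x < fst d}" c] c by auto
    then have "fst v = x" using adj_fst_dist[OF uv(3)] by auto
    then show ?thesis using uv by force
  qed
qed

text \<open>Every column between the origin and a cell contributes a boundary edge on top.\<close>

lemma abs_fst_less_pe:
  assumes dc: "DCP P" and z: "(0, 0) \<in> P" and c: "c \<in> P"
  shows "\<bar>fst c\<bar> < int (pe P)"
proof -
  have fin: "finite P" and ec: "edge_connected P" using dc by (auto simp: DCP_iff)
  let ?I = "{min 0 (fst c)..max 0 (fst c)}"
  let ?top = "\<lambda>x. Max {y. (x, y) \<in> P}"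
  let ?g = "\<lambda>x. ((x, ?top x), (x, ?top x + 1))"
  let ?E = "{(d, d'). d \<in> P \<and> d' \<notin> P \<and> adj d d'}"
  have finE: "finite ?E"
    by (rule finite_subset[of _ "Sigma P (\<lambda>d. {d'. adj d d'})"]) (auto simp: fin finite_adj_set)
  have "?g ` ?I \<subseteq> ?E"
  proof
    fix e assume "e \<in> ?g ` ?I"
    then obtain x where x: "x \<in> ?I" "e = ?g x" by auto
    have "x \<in> fst ` P" using column_occupied[OF ec z c] x by auto
    then obtain y where y: "(x, y) \<in> P" by force
    have fy: "finite {y. (x, y) \<in> P}"
      by (rule finite_subset[of _ "snd ` P"]) (use fin in force)+
    have "?top x \<in> {y. (x, y) \<in> P}" using y fy Max_in by blast
    moreover have "(x, ?top x + 1) \<notin> P"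
    proof
      assume "(x, ?top x + 1) \<in> P"
      then have "?top x + 1 \<le> ?top x" by (intro Max_ge[OF fy]) simp
      then show False by simp
    qed
    ultimately show "e \<in> ?E" using x by (auto simp: adj_def)
  qed
  then have "card (?g ` ?I) \<le> card ?E" by (rule card_mono[OF finE])
  moreover have "inj_on ?g ?I" by (auto simp: inj_on_def)
  ultimately have "card ?I \<le> card ?E" by (simp add: card_image)
  then show ?thesis unfolding pe_def by auto
qed

lemma adj_swap [simp]: "adj (prod.swap c) (prod.swap c') \<longleftrightarrow> adj c c'"
  by (auto simp: adj_def)

lemma DCP_swap:
  assumes dc: "DCP P"
  shows "DCP (prod.swap ` P)"
proof -
  have "diag_convex (prod.swap ` P)"
    unfolding diag_convex_def diag_def
  proof (intro allI impI, simp only: mem_Collect_eq)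
    fix n a b c assume h: "(a, n - a) \<in> prod.swap ` P" "(c, n - c) \<in> prod.swap ` P" "a \<le> b" "b \<le> c"
    then have "n - a \<in> diag P n" "n - c \<in> diag P n" by (auto simp: diag_def image_iff)
    then have "n - b \<in> diag P n" using diag_convexD[of P "n - c" n "n - a" "n - b"] dc h(3,4) by (simp add: DCP_iff)
    then show "(b, n - b) \<in> prod.swap ` P" by (force simp: diag_def image_iff)
  qed
  then show ?thesis using dc edge_connected_image[of P prod.swap] by (simp add: DCP_iff)
qed

lemma abs_snd_less_pe:
  assumes "DCP P" "(0, 0) \<in> P" "c \<in> P"
  shows "\<bar>snd c\<bar> < int (pe P)"
proof -
  have "(0, 0) \<in> prod.swap ` P" "prod.swap c \<in> prod.swap ` P" using assms(2,3) by force+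
  then have "\<bar>fst (prod.swap c)\<bar> < int (pe (prod.swap ` P))"
    by (intro abs_fst_less_pe DCP_swap assms(1))
  then show ?thesis using pe_image[of prod.swap P] by simp
qed

lemma finite_anchored_pe_le: "finite {P. DCP P \<and> anchored P \<and> pe P \<le> p}"
proof (rule finite_subset[of _ "Pow ({-int p..int p} \<times> {-int p..int p})"])
  show "{P. DCP P \<and> anchored P \<and> pe P \<le> p} \<subseteq> Pow ({-int p..int p} \<times> {-int p..int p})"
  proof (intro subsetI PowI)
    fix P c assume "P \<in> {P. DCP P \<and> anchored P \<and> pe P \<le> p}" "c \<in> P"
    then show "c \<in> {-int p..int p} \<times> {-int p..int p}"
      using abs_fst_less_pe[of P c] abs_snd_less_pe[of P c] by (cases c) (auto simp: anchored_def)
  qed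
qed simp

lemma finite_anchored_dcps: "finite (anchored_dcps n p l)"
  by (rule finite_subset[OF _ finite_anchored_pe_le[of p]]) (auto simp: anchored_dcps_def)

section \<open>The recurrence for two-nosed DCPs\<close>

definition extensions :: "cell set \<Rightarrow> nat \<Rightarrow> (nat \<times> nat) set" where
  "extensions Q i = {(el, er). el + er = i \<and> (0 < el \<longrightarrow> nose_left Q) \<and> (0 < er \<longrightarrow> nose_right Q)}"

lemma card_extensions:
  "card (extensions Q i) = (if noses Q = 2 then i + 1 else if noses Q = 1 then 1 else if i = 0 then 1 else 0)"
proof -
  consider "nose_left Q" "nose_right Q" | "nose_left Q" "\<not> nose_right Q" | "\<not> nose_left Q" "nose_right Q"
    | "\<not> nose_left Q" "\<not> nose_right Q" by blast
  then show ?thesis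
  proof cases
    case 1
    then have "extensions Q i = (\<lambda>j. (j, i - j)) ` {0..i}" by (auto simp: extensions_def image_iff)
    moreover have "inj_on (\<lambda>j. (j, i - j)) {0..i}" by (auto simp: inj_on_def)
    ultimately show ?thesis using 1 by (simp add: card_image noses_def)
  next
    case 2
    then have "extensions Q i = {(i, 0)}" by (auto simp: extensions_def)
    then show ?thesis using 2 by (simp add: noses_def)
  next
    case 3
    then have "extensions Q i = {(0, i)}" by (auto simp: extensions_def)
    then show ?thesis using 3 by (simp add: noses_def)
  next
    case 4
    then have "extensions Q i = (if i = 0 then {(0, 0)} else {})" by (auto simp: extensions_def)
    then show ?thesis using 4 by (simp add: noses_def)
  qed
qed

lemma finite_extensions: "finite (extensions Q i)"
  by (rule finite_subset[of _ "{..i} \<times> {..i}"]) (auto simp: extensions_def)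

lemma extensions_sum: "(el, er) \<in> extensions Q i \<Longrightarrow> el + er = i"
  by (simp add: extensions_def)

lemma grow_data_eq_Union:
  "grow_data n p l = (\<Union>i\<in>{i. i < l \<and> 4 + 4 * i \<le> p}.
     Sigma (anchored_dcps (n - 1) (p - 4 - 4 * i) (l - 1 - i)) (\<lambda>Q. extensions Q i))"
  by (auto simp: grow_data_def extensions_def)

lemma sum_by_noses:
  assumes "finite A"
  shows "(\<Sum>Q\<in>A. f (noses Q)) = f 2 * card {Q \<in> A. noses Q = 2} + f 1 * card {Q \<in> A. noses Q = 1}
    + f 0 * card {Q \<in> A. noses Q = 0}"
proof -
  have "(\<Sum>Q\<in>A. f (noses Q)) =
      (\<Sum>Q\<in>{Q \<in> A. noses Q = 2} \<union> ({Q \<in> A. noses Q = 1} \<union> {Q \<in> A. noses Q = 0}). f (noses Q))"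
    by (rule sum.cong) (auto simp: noses_def)
  also have "\<dots> = (\<Sum>Q\<in>{Q \<in> A. noses Q = 2}. f (noses Q))
      + ((\<Sum>Q\<in>{Q \<in> A. noses Q = 1}. f (noses Q)) + (\<Sum>Q\<in>{Q \<in> A. noses Q = 0}. f (noses Q)))"
    using assms by (subst sum.union_disjoint, auto)+
  finally show ?thesis by (simp add: mult.commute)
qed

lemma card_two_nosed_rec:
  assumes "3 \<le> n"
  shows "card (anchored_dcps_noses 2 n p l) = (\<Sum>i | i < l \<and> 4 + 4 * i \<le> p.
      (i + 1) * card (anchored_dcps_noses 2 (n - 1) (p - 4 - 4 * i) (l - 1 - i))
      + card (anchored_dcps_noses 1 (n - 1) (p - 4 - 4 * i) (l - 1 - i))
      + (if i = 0 then card (anchored_dcps_noses 0 (n - 1) (p - 4 - 4 * i) (l - 1 - i)) else 0))"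
proof -
  have fin: "finite {i. i < l \<and> 4 + 4 * i \<le> p}" by simp
  have "card (anchored_dcps_noses 2 n p l) = card (grow_data n p l)"
    using bij_betw_same_card[OF bij_betw_grow[OF assms]] by simp
  also have "\<dots> = (\<Sum>i | i < l \<and> 4 + 4 * i \<le> p.
      card (Sigma (anchored_dcps (n - 1) (p - 4 - 4 * i) (l - 1 - i)) (\<lambda>Q. extensions Q i)))"
    unfolding grow_data_eq_Union
    by (rule card_UN_disjoint[OF fin])
      (auto intro!: finite_SigmaI finite_anchored_dcps finite_extensions dest: extensions_sum)
  also have "\<dots> = (\<Sum>i | i < l \<and> 4 + 4 * i \<le> p.
      \<Sum>Q\<in>anchored_dcps (n - 1) (p - 4 - 4 * i) (l - 1 - i). card (extensions Q i))"
    by (simp add: card_SigmaI finite_anchored_dcps finite_extensions)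
  also have "\<dots> = (\<Sum>i | i < l \<and> 4 + 4 * i \<le> p.
      (i + 1) * card (anchored_dcps_noses 2 (n - 1) (p - 4 - 4 * i) (l - 1 - i))
      + card (anchored_dcps_noses 1 (n - 1) (p - 4 - 4 * i) (l - 1 - i))
      + (if i = 0 then card (anchored_dcps_noses 0 (n - 1) (p - 4 - 4 * i) (l - 1 - i)) else 0))"
  proof (rule sum.cong[OF refl])
    fix i
    show "(\<Sum>Q\<in>anchored_dcps (n - 1) (p - 4 - 4 * i) (l - 1 - i). card (extensions Q i)) =
      (i + 1) * card (anchored_dcps_noses 2 (n - 1) (p - 4 - 4 * i) (l - 1 - i))
      + card (anchored_dcps_noses 1 (n - 1) (p - 4 - 4 * i) (l - 1 - i))
      + (if i = 0 then card (anchored_dcps_noses 0 (n - 1) (p - 4 - 4 * i) (l - 1 - i)) else 0)"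
      unfolding card_extensions
      using sum_by_noses[OF finite_anchored_dcps,
          of "\<lambda>k. if k = 2 then i + 1 else if k = 1 then 1 else if i = 0 then 1 else 0"] by simp
  qed
  finally show ?thesis .
qed

section \<open>Two-nosed DCPs with two diagonals\<close>

lemma cell_set_eqI: "(\<And>k. diag P k = diag Q k) \<Longrightarrow> P = Q"
  by (metis dcell_cases dcell_in_iff subsetI subset_antisym)

definition bar :: "nat \<Rightarrow> cell set" where
  "bar w = dcell 0 ` {0..int w - 1}"

lemma diag_bar: "diag (bar w) k = (if k = 0 then {0..int w - 1} else {})"
  by (auto simp: bar_def dcell_in_iff[symmetric])

lemma bar_facts:
  assumes w: "1 \<le> w"
  shows "growable (bar w) 0 0" "anchored (bar w)" "lastdiag_index (bar w) = 0" "di (bar w) = 1"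
    "pe (bar w) = 4 * w" "la (bar w) = w" "last_lo (bar w) = 0" "last_hi (bar w) = int w - 1"
proof -
  have fin: "finite (bar w)" by (simp add: bar_def)
  have diags: "diags (bar w) = {0}" using w by (auto simp: mem_diags_iff diag_bar)
  then show L: "lastdiag_index (bar w) = 0" by (simp add: lastdiag_index_def)
  show "growable (bar w) 0 0"
  proof
    show "bar w \<noteq> {}" using w by (auto simp: bar_def)
    show "diag_convex (bar w)" unfolding diag_convex_def diag_bar by auto
    fix q assume "q \<in> bar w"
    then show "\<exists>i\<in>diag (bar w) (lastdiag_index (bar w)). (q, dcell (lastdiag_index (bar w)) i) \<in> (inner_adj (bar w))\<^sup>*"
      unfolding L by (auto simp: bar_def dcell_in_iff[symmetric])
  qed (use w in \<open>auto simp: fin last_lo_def last_hi_def L diag_bar Min_Icc_int Max_Icc_int\<close>)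
  show "anchored (bar w)" using w by (auto simp: anchored_def bar_def dcell_def image_iff)
  show "di (bar w) = 1" using diags by (simp add: di_def)
  have "pe (bar w) + card (inner_adj (bar w)) = 4 * card (bar w)" by (rule pe_add_card_inner_adj[OF fin])
  then show "pe (bar w) = 4 * w" by (simp add: bar_def inner_adj_dcell_image card_dcell_image)
  show "la (bar w) = w" unfolding la_eq_card_diag L diag_bar by simp
  show "last_lo (bar w) = 0" "last_hi (bar w) = int w - 1"
    unfolding last_lo_def last_hi_def L diag_bar using w by (simp_all add: Min_Icc_int Max_Icc_int)
qed

lemma grow_bar_mem:
  assumes "1 \<le> w"
  shows "grow (bar w) 0 0 \<in> anchored_dcps_noses 2 2 (4 * w + 4) (w + 1)"
proof -
  note B = bar_facts[OF assms]
  interpret growable "bar w" 0 0 by (rule B(1))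
  show ?thesis
    using DCP_grow anchored_grow[OF B(2)] di_grow noses_grow pe_grow la_grow B
    by (simp add: anchored_dcps_def)
qed

lemma anchored_two_diags:
  assumes P: "DCP P" "anchored P" "di P = 2"
  shows "lastdiag_index P = 1" "diags P = {0, 1}"
proof -
  have fin: "finite P" using P(1) by (simp add: DCP_iff)
  let ?M = "lastdiag_index P"
  have in3: "0 \<in> diags P" "?M - 1 \<in> diags P" "?M \<in> diags P"
    using P(2) diag_index_in_diags[of "(0, 0)" P] second_last_diag_eq[OF P(1)] P(3)
      lastdiag_index_in_diags[OF fin] by (auto simp: anchored_def mem_diags_iff)
  have sub: "diags P \<subseteq> {0..?M}"
    using P(2) le_lastdiag_index[OF fin] by (force simp: anchored_def diags_def)
  show M: "?M = 1"
  proof (rule ccontr)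
    assume "?M \<noteq> 1"
    then consider "2 \<le> ?M" | "?M \<le> 0" by linarith
    then show False
    proof cases
      case 1
      then have "card {0, ?M - 1, ?M} = 3" by (simp add: card_insert_if)
      moreover have "card {0, ?M - 1, ?M} \<le> card (diags P)"
        by (rule card_mono[OF finite_diags[OF fin]]) (use in3 in simp)
      ultimately show False using P(3) by (simp add: di_def)
    next
      case 2
      then have "diags P \<subseteq> {0}" using sub by auto
      then show False using P(3) card_mono[of "{0}" "diags P"] unfolding di_def by simp
    qed
  qed
  show "diags P = {0, 1}" using sub in3 M by auto
qed

lemma two_diags_eq_grow_bar:
  assumes "P \<in> anchored_dcps_noses 2 2 p l"
  shows "2 \<le> l" "P = grow (bar (l - 1)) 0 0"
proof -
  have P: "DCP P" "anchored P" "di P = 2" "noses P = 2" "la P = l"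
    using assms by (auto simp: anchored_dcps_def)
  note M = anchored_two_diags[OF P(1-3)]
  have D1: "diag P 0 = {nose_ia P..nose_ib P}" "nose_ia P \<le> nose_ib P"
    using second_last_diag_eq[OF P(1)] P(3) M(1) by auto
  have DM: "diag P 1 = {nose_ia P..nose_ib P + 1}" using last_diag_two_noses[OF P(1)] P(3,4) M(1) by simp
  have z: "0 \<in> diag P 0" "\<forall>i\<in>diag P 0. 0 \<le> i" using P(2) by (auto simp: anchored_def diag_def)
  have "nose_ia P \<le> 0" "0 \<le> nose_ia P" using z D1 by simp_all
  then have ia: "nose_ia P = 0" by simp
  have l: "l = nat (nose_ib P) + 2" using P(5) D1(2) unfolding la_eq_card_diag M(1) DM ia by simp
  then show "2 \<le> l" by simp
  have w: "1 \<le> l - 1" "int (l - 1) - 1 = nose_ib P" using l D1(2) ia by simp_all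
  note B = bar_facts[OF w(1)]
  interpret growable "bar (l - 1)" 0 0 by (rule B(1))
  have "diag P 0 = {0..nose_ib P}" "diag P 1 = {0..nose_ib P + 1}" using D1(1) DM ia by simp_all
  moreover have "diag (grow (bar (l - 1)) 0 0) 0 = {0..nose_ib P}"
    "diag (grow (bar (l - 1)) 0 0) 1 = {0..nose_ib P + 1}"
    using diag_grow_m diag_grow_m1 unfolding B(3,7,8) w(2) by simp_all
  moreover have "diag P k = {}" "diag (grow (bar (l - 1)) 0 0) k = {}" if "k \<noteq> 0" "k \<noteq> 1" for k
    using that M(2) diag_grow_other[of k] diag_bar[of "l - 1" k] unfolding B(3) by (auto simp: mem_diags_iff)
  ultimately show "P = grow (bar (l - 1)) 0 0"
    by (intro cell_set_eqI) (metis (no_types))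
qed

lemma card_two_nosed_two_diags: "card (anchored_dcps_noses 2 2 p l) = (if p = 4 * l \<and> 2 \<le> l then 1 else 0)"
proof (cases "p = 4 * l \<and> 2 \<le> l")
  case True
  then have "1 \<le> l - 1" by auto
  then have "grow (bar (l - 1)) 0 0 \<in> anchored_dcps_noses 2 2 p l"
    using grow_bar_mem[of "l - 1"] True by (simp add: algebra_simps)
  then have "anchored_dcps_noses 2 2 p l = {grow (bar (l - 1)) 0 0}"
    using two_diags_eq_grow_bar(2) by blast
  then show ?thesis using True by simp
next
  case False
  have "anchored_dcps_noses 2 2 p l = {}"
  proof (intro equals0I)
    fix P assume P: "P \<in> anchored_dcps_noses 2 2 p l"
    then have "2 \<le> l" "P = grow (bar (l - 1)) 0 0" by (rule two_diags_eq_grow_bar)+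
    moreover have "1 \<le> l - 1" using \<open>2 \<le> l\<close> by simp
    then have "grow (bar (l - 1)) 0 0 \<in> anchored_dcps_noses 2 2 (4 * l) l"
      using grow_bar_mem[of "l - 1"] \<open>2 \<le> l\<close> by (simp add: algebra_simps)
    ultimately show False using P False by (auto simp: anchored_dcps_def)
  qed
  then have "card (anchored_dcps_noses 2 2 p l) = 0" by (simp only: card.empty)
  then show ?thesis using False by simp
qed

section \<open>Translations\<close>

definition shift :: "int \<Rightarrow> int \<Rightarrow> cell \<Rightarrow> cell" where
  "shift u v c = (fst c + u, snd c + v)"

lemma shift_shift [simp]: "shift u v (shift u' v' c) = shift (u + u') (v + v') c"
  by (simp add: shift_def algebra_simps)

lemma shift_image_shift_image: "shift u v ` shift u' v' ` P = shift (u + u') (v + v') ` P"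
  by (simp add: image_image)

lemma shift_image_0 [simp]: "shift 0 0 ` P = P"
  by (simp add: shift_def)

lemma bij_shift: "bij (shift u v)"
  by (rule o_bij[of "shift (- u) (- v)"]) (auto simp: shift_def fun_eq_iff)

lemma adj_shift [simp]: "adj (shift u v c) (shift u v c') \<longleftrightarrow> adj c c'"
  by (simp add: shift_def adj_def)

lemma diag_shift_image: "diag (shift u v ` P) k = (\<lambda>i. i + u) ` diag P (k - u - v)"
  by (force simp: diag_def shift_def image_iff algebra_simps)

lemma diags_shift_image: "diags (shift u v ` P) = (\<lambda>k. k + (u + v)) ` diags P"
  by (force simp: diags_def shift_def image_iff algebra_simps)

lemma Min_translate: "finite S \<Longrightarrow> S \<noteq> {} \<Longrightarrow> Min ((\<lambda>i. i + u) ` S) = Min S + (u :: int)"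
  using Min_add_commute[of S "\<lambda>x. x" u] by simp

lemma Max_translate: "finite S \<Longrightarrow> S \<noteq> {} \<Longrightarrow> Max ((\<lambda>i. i + u) ` S) = Max S + (u :: int)"
  using Max_add_commute[of S "\<lambda>x. x" u] by simp

lemma lastdiag_index_shift_image:
  "finite P \<Longrightarrow> P \<noteq> {} \<Longrightarrow> lastdiag_index (shift u v ` P) = lastdiag_index P + (u + v)"
  unfolding lastdiag_index_def diags_shift_image
  by (rule Max_translate) (auto simp: finite_diags dest: diag_index_in_diags)

lemma DCP_shift_image:
  assumes "DCP P"
  shows "DCP (shift u v ` P)"
proof -
  have cv: "diag_convex P" using assms by (simp add: DCP_iff)
  have "diag_convex (shift u v ` P)"
    unfolding diag_convex_def diag_shift_image
  proof (intro allI impI)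
    fix k a b c
    assume h: "a \<in> (\<lambda>i. i + u) ` diag P (k - u - v)" "c \<in> (\<lambda>i. i + u) ` diag P (k - u - v)" "a \<le> b" "b \<le> c"
    then obtain a0 c0 where "a0 \<in> diag P (k - u - v)" "c0 \<in> diag P (k - u - v)" "a = a0 + u" "c = c0 + u"
      by blast
    then have "b - u \<in> diag P (k - u - v)" using diag_convexD[OF cv, of a0 _ c0 "b - u"] h(3,4) by simp
    then show "b \<in> (\<lambda>i. i + u) ` diag P (k - u - v)" by (force simp: image_iff)
  qed
  then show ?thesis
    using assms edge_connected_image[of P "shift u v"] by (simp add: DCP_iff)
qed

lemma di_shift_image: "di (shift u v ` P) = di P"
  unfolding di_def diags_shift_image by (rule card_image) (simp add: inj_on_def)

lemma pe_shift_image: "pe (shift u v ` P) = pe P"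
  by (rule pe_image[OF bij_shift adj_shift])

lemma la_shift_image: "finite P \<Longrightarrow> P \<noteq> {} \<Longrightarrow> la (shift u v ` P) = la P"
  unfolding la_eq_card_diag by (simp add: lastdiag_index_shift_image diag_shift_image card_image inj_on_def)

lemma noses_shift_image:
  assumes "DCP P" "2 \<le> di P"
  shows "noses (shift u v ` P) = noses P"
proof -
  have fin: "finite P" and ne: "P \<noteq> {}" using assms(1) by (auto simp: DCP_iff)
  let ?M = "lastdiag_index P"
  have L: "lastdiag_index (shift u v ` P) = ?M + (u + v)" by (rule lastdiag_index_shift_image[OF fin ne])
  have e: "?M + (u + v) - 1 - u - v = ?M - 1" "?M + (u + v) - u - v = ?M" by simp_all
  have ne1: "diag P (?M - 1) \<noteq> {}" using second_last_diag_eq[OF assms] by auto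
  have ia: "nose_ia (shift u v ` P) = nose_ia P + u"
    unfolding nose_ia_eq_Min L diag_shift_image e by (rule Min_translate[OF finite_diag[OF fin] ne1])
  have ib: "nose_ib (shift u v ` P) = nose_ib P + u"
    unfolding nose_ib_eq_Max L diag_shift_image e by (rule Max_translate[OF finite_diag[OF fin] ne1])
  show ?thesis
    unfolding noses_def nose_left_iff nose_right_iff ia ib L diag_shift_image e by (auto simp: image_iff)
qed

section \<open>Counting translation classes by anchored representatives\<close>

definition first_diag :: "cell set \<Rightarrow> int" where
  "first_diag P = Min (diags P)"

definition first_lo :: "cell set \<Rightarrow> int" where
  "first_lo P = Min (diag P (first_diag P))"

definition anchor :: "cell set \<Rightarrow> cell set" where
  "anchor P = shift (- first_lo P) (first_lo P - first_diag P) ` P"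

definition normalize :: "cell set \<Rightarrow> cell set" where
  "normalize P = shift (- Min (fst ` P)) (- Min (snd ` P)) ` P"

lemma first_diag_lo_shift_image:
  assumes "finite P" "P \<noteq> {}"
  shows "first_diag (shift u v ` P) = first_diag P + (u + v)" "first_lo (shift u v ` P) = first_lo P + u"
proof -
  have fd: "finite (diags P)" "diags P \<noteq> {}"
    using finite_diags[OF assms(1)] assms(2) by (auto dest: diag_index_in_diags)
  show A: "first_diag (shift u v ` P) = first_diag P + (u + v)"
    unfolding first_diag_def diags_shift_image by (rule Min_translate[OF fd])
  have "diag P (first_diag P) \<noteq> {}" using Min_in[OF fd] by (simp add: first_diag_def mem_diags_iff)
  then show "first_lo (shift u v ` P) = first_lo P + u"
    unfolding first_lo_def A diag_shift_image using Min_translate[OF finite_diag[OF assms(1)]] by simp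
qed

lemma anchored_iff:
  assumes fin: "finite P" and ne: "P \<noteq> {}"
  shows "anchored P \<longleftrightarrow> first_diag P = 0 \<and> first_lo P = 0"
proof
  have fd: "finite (diags P)" "diags P \<noteq> {}"
    using finite_diags[OF fin] ne by (auto dest: diag_index_in_diags)
  assume a: "anchored P"
  then have z: "(0, 0) \<in> P" by (simp add: anchored_def)
  have A: "first_diag P = 0"
    unfolding first_diag_def using a fd diag_index_in_diags[OF z]
    by (intro Min_eqI) (auto simp: anchored_def diags_def)
  have "0 \<in> diag P 0" "\<forall>i\<in>diag P 0. 0 \<le> i" using a by (auto simp: anchored_def diag_def)
  then have "first_lo P = 0" unfolding first_lo_def A using finite_diag[OF fin] by (intro Min_eqI) auto
  then show "first_diag P = 0 \<and> first_lo P = 0" using A by simp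
next
  have fd: "finite (diags P)" "diags P \<noteq> {}"
    using finite_diags[OF fin] ne by (auto dest: diag_index_in_diags)
  assume "first_diag P = 0 \<and> first_lo P = 0"
  then have h: "first_diag P = 0" "first_lo P = 0" by simp_all
  have m0: "0 \<in> diags P" "\<forall>k\<in>diags P. 0 \<le> k"
    using h Min_in[OF fd] Min_le[OF fd(1)] unfolding first_diag_def by auto
  then have "diag P 0 \<noteq> {}" by (simp add: mem_diags_iff)
  then have "Min (diag P 0) \<in> diag P 0" "\<forall>i\<in>diag P 0. Min (diag P 0) \<le> i"
    using Min_in[OF finite_diag[OF fin]] Min_le[OF finite_diag[OF fin]] by auto
  then have d0: "0 \<in> diag P 0" "\<forall>i\<in>diag P 0. 0 \<le> i" using h unfolding first_lo_def by simp_all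
  show "anchored P"
    unfolding anchored_def
  proof (intro conjI ballI)
    show "(0, 0) \<in> P" using d0(1) by (simp add: diag_def)
    fix c assume c: "c \<in> P"
    show "0 \<le> fst c + snd c" using m0(2) diag_index_in_diags[OF c] by blast
    show "fst c + snd c = 0 \<longrightarrow> 0 \<le> fst c"
    proof
      assume "fst c + snd c = 0"
      then have "snd c = - fst c" by simp
      then have "fst c \<in> diag P 0" using c by (cases c) (simp add: diag_def)
      then show "0 \<le> fst c" using d0(2) by blast
    qed
  qed
qed

lemma normalized_iff:
  assumes "finite P" "P \<noteq> {}"
  shows "normalized P \<longleftrightarrow> Min (fst ` P) = 0 \<and> Min (snd ` P) = 0"
proof -
  have ff: "finite (fst ` P)" "fst ` P \<noteq> {}" "finite (snd ` P)" "snd ` P \<noteq> {}" using assms by auto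
  show ?thesis
  proof
    assume n: "normalized P"
    show "Min (fst ` P) = 0 \<and> Min (snd ` P) = 0"
      using n ff unfolding normalized_def by (auto intro!: Min_eqI simp: image_iff) force+
  next
    assume h: "Min (fst ` P) = 0 \<and> Min (snd ` P) = 0"
    have "0 \<in> fst ` P" "0 \<in> snd ` P" using h ff by (metis Min_in)+
    moreover have "\<forall>c\<in>P. 0 \<le> fst c \<and> 0 \<le> snd c" using h ff by (metis Min_le image_eqI)
    ultimately show "normalized P" unfolding normalized_def by (auto simp: image_iff)
  qed
qed

lemma Min_fst_snd_shift_image:
  assumes "finite P" "P \<noteq> {}"
  shows "Min (fst ` shift u v ` P) = Min (fst ` P) + u" "Min (snd ` shift u v ` P) = Min (snd ` P) + v"
proof -
  have "fst ` shift u v ` P = (\<lambda>i. i + u) ` fst ` P" "snd ` shift u v ` P = (\<lambda>i. i + v) ` snd ` P"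
    by (auto simp: shift_def image_image)
  then show "Min (fst ` shift u v ` P) = Min (fst ` P) + u" "Min (snd ` shift u v ` P) = Min (snd ` P) + v"
    using assms by (simp_all add: Min_translate)
qed

lemma
  assumes "finite P" "P \<noteq> {}"
  shows anchored_anchor: "anchored (anchor P)"
    and anchor_shift_image: "anchor (shift u v ` P) = anchor P"
    and normalized_normalize: "normalized (normalize P)"
    and normalize_shift_image: "normalize (shift u v ` P) = normalize P"
proof -
  note fd = first_diag_lo_shift_image[OF assms] and mm = Min_fst_snd_shift_image[OF assms]
  have shifted: "finite (shift u v ` P)" "shift u v ` P \<noteq> {}" for u v using assms by auto
  show "anchored (anchor P)" unfolding anchor_def anchored_iff[OF shifted] fd by simp
  show "anchor (shift u v ` P) = anchor P"
    unfolding anchor_def fd shift_image_shift_image by (simp add: algebra_simps)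
  show "normalized (normalize P)" unfolding normalize_def normalized_iff[OF shifted] mm by simp
  show "normalize (shift u v ` P) = normalize P"
    unfolding normalize_def mm shift_image_shift_image by (simp add: algebra_simps)
qed

lemma anchor_id: "finite P \<Longrightarrow> P \<noteq> {} \<Longrightarrow> anchored P \<Longrightarrow> anchor P = P"
  by (simp add: anchor_def anchored_iff)

lemma normalize_id: "finite P \<Longrightarrow> P \<noteq> {} \<Longrightarrow> normalized P \<Longrightarrow> normalize P = P"
  by (simp add: normalize_def normalized_iff)

lemma dcp_count_eq_card: "dcp_count k n p l = card (anchored_dcps_noses k n p l)"
proof -
  define counted where "counted P \<longleftrightarrow> DCP P \<and> 2 \<le> di P \<and> noses P = k \<and> di P = n \<and> pe P = p \<and> la P = l" for P
  have counted_shift: "counted (shift u v ` P) \<longleftrightarrow> counted P" if "finite P" "P \<noteq> {}" for u v P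
  proof
    show "counted P \<Longrightarrow> counted (shift u v ` P)"
      using that DCP_shift_image di_shift_image pe_shift_image la_shift_image noses_shift_image
      unfolding counted_def by metis
    assume "counted (shift u v ` P)"
    then have "counted (shift (- u) (- v) ` shift u v ` P)"
      using that DCP_shift_image di_shift_image pe_shift_image la_shift_image noses_shift_image
      unfolding counted_def by (metis finite_imageI image_is_empty)
    then show "counted P" by (simp add: shift_image_shift_image)
  qed
  have fin: "finite P" "P \<noteq> {}" if "counted P" for P using that by (auto simp: counted_def DCP_iff)
  have counted_anchor: "counted (anchor P) \<longleftrightarrow> counted P" and counted_normalize: "counted (normalize P) \<longleftrightarrow> counted P"
    if "finite P" "P \<noteq> {}" for P
    using counted_shift[OF that] by (simp_all add: anchor_def normalize_def)
  have "bij_betw anchor {P. counted P \<and> normalized P} {P. counted P \<and> anchored P}"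
  proof (rule bij_betw_byWitness[where f' = normalize])
    show "\<forall>P\<in>{P. counted P \<and> normalized P}. normalize (anchor P) = P"
      using fin by (auto simp: anchor_def normalize_shift_image normalize_id)
    show "\<forall>P\<in>{P. counted P \<and> anchored P}. anchor (normalize P) = P"
      using fin by (auto simp: normalize_def anchor_shift_image anchor_id)
    show "anchor ` {P. counted P \<and> normalized P} \<subseteq> {P. counted P \<and> anchored P}"
      using fin counted_anchor anchored_anchor by blast
    show "normalize ` {P. counted P \<and> anchored P} \<subseteq> {P. counted P \<and> normalized P}"
      using fin counted_normalize normalized_normalize by blast
  qed
  then have "card {P. counted P \<and> normalized P} = card {P. counted P \<and> anchored P}"
    by (rule bij_betw_same_card)
  moreover have "{P. counted P \<and> normalized P} = {P. DCP P \<and> normalized P \<and> di P \<ge> 2 \<and> noses P = k \<and>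
       di P = n \<and> pe P = p \<and> la P = l}" "{P. counted P \<and> anchored P} = anchored_dcps_noses k n p l"
    by (auto simp: counted_def anchored_dcps_def)
  ultimately show ?thesis by (simp add: dcp_count_def)
qed

section \<open>The generating function identity\<close>

unbundle fps_syntax

lemma dcp_count_lt_2:
  assumes "n < 2"
  shows "dcp_count k n p l = 0"
proof -
  have "anchored_dcps n p l = {}" using assms by (auto simp: anchored_dcps_def)
  then show ?thesis by (simp add: dcp_count_eq_card)
qed

lemma dcp_count_two_noses:
  "dcp_count 2 n p l = (if n = 2 \<and> p = 4 * l \<and> 2 \<le> l then 1 else 0) + (\<Sum>i | i < l \<and> 4 + 4 * i \<le> p.
      (i + 1) * dcp_count 2 (n - 1) (p - 4 - 4 * i) (l - 1 - i) + dcp_count 1 (n - 1) (p - 4 - 4 * i) (l - 1 - i)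
      + (if i = 0 then dcp_count 0 (n - 1) (p - 4 - 4 * i) (l - 1 - i) else 0))"
proof -
  consider "3 \<le> n" | "n = 2" | "n < 2" by linarith
  then show ?thesis
  proof cases
    case 1 then show ?thesis unfolding dcp_count_eq_card using card_two_nosed_rec by simp
  next
    case 2 then show ?thesis using card_two_nosed_two_diags dcp_count_lt_2 by (simp add: dcp_count_eq_card)
  qed (simp add: dcp_count_lt_2)
qed

text \<open>\<open>coeff3 F l p n\<close> is the coefficient of \<open>z\<^sup>l x\<^sup>p d\<^sup>n\<close>.\<close>

definition coeff3 :: "rat fps fps fps \<Rightarrow> nat \<Rightarrow> nat \<Rightarrow> nat \<Rightarrow> rat" where
  "coeff3 F l p n = F $ l $ p $ n"

lemma coeff3_eqI: "(\<And>l p n. coeff3 F l p n = coeff3 G l p n) \<Longrightarrow> F = G"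
  by (simp add: coeff3_def fps_eq_iff)

lemma coeff3_add: "coeff3 (F + G) l p n = coeff3 F l p n + coeff3 G l p n"
  by (simp add: coeff3_def)

lemma coeff3_GF: "coeff3 (GF k) l p n = of_nat (dcp_count k n p l)"
  by (simp add: coeff3_def GF_def)

lemma coeff3_monomial_mult:
  "coeff3 (Dv ^ a * Xv ^ b * Zv ^ c * F) l p n =
     (if a \<le> n \<and> b \<le> p \<and> c \<le> l then coeff3 F (l - c) (p - b) (n - a) else 0)"
proof -
  have e: "Dv ^ a * Xv ^ b * Zv ^ c * F = fps_const (fps_const (fps_X ^ a)) * (fps_const (fps_X ^ b) * (fps_X ^ c * F))"
    by (simp add: Dv_def Xv_def Zv_def fps_const_power mult.assoc)
  show ?thesis unfolding coeff3_def e by (simp add: fps_X_power_mult_nth)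
qed

lemma coeff3_one: "coeff3 1 l p n = (if l = 0 \<and> p = 0 \<and> n = 0 then 1 else 0)"
  by (simp add: coeff3_def)

text \<open>\<open>x4z_series c = \<Sum>\<^sub>i c\<^sub>i (x\<^sup>4z)\<^sup>i\<close>.\<close>

definition x4z_series :: "(nat \<Rightarrow> nat) \<Rightarrow> rat fps fps fps" where
  "x4z_series c = Abs_fps (\<lambda>i. of_nat (c i) * fps_X ^ (4 * i))"

lemma coeff3_x4z_series_mult:
  "coeff3 (x4z_series c * F) l p n = (\<Sum>i\<le>l. of_nat (c i) * (if 4 * i \<le> p then coeff3 F (l - i) (p - 4 * i) n else 0))"
proof -
  have "coeff3 (x4z_series c * F) l p n = (\<Sum>i\<le>l. (fps_const (of_nat (c i)) * (fps_X ^ (4 * i) * F $ (l - i))) $ p $ n)"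
    by (simp add: coeff3_def x4z_series_def fps_mult_nth fps_sum_nth atLeast0AtMost fps_of_nat mult.assoc)
  also have "\<dots> = (\<Sum>i\<le>l. of_nat (c i) * (if 4 * i \<le> p then coeff3 F (l - i) (p - 4 * i) n else 0))"
    by (rule sum.cong) (auto simp: coeff3_def fps_X_power_mult_nth)
  finally show ?thesis .
qed

lemma x4z_series_delta: "x4z_series (\<lambda>i. if i = 0 then 1 else 0) = 1"
  by (simp add: x4z_series_def fps_eq_iff)

lemma fps_inverse_eqI:
  fixes f g :: "'a :: {ring_1, inverse} fps"
  assumes "f * g = 1" "g $ 0 * f $ 0 = 1" "inverse (f $ 0) = g $ 0"
  shows "inverse f = g"
  using fps_lr_inverse_unique_ring1(2)[OF assms(1,2)] assms(3) by (simp add: fps_inverse_def)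

lemma x4z_eq: "Xv ^ 4 * Zv = fps_const (fps_X ^ 4) * fps_X"
  by (simp add: Xv_def Zv_def fps_const_power)

lemma one_minus_x4z_mult: "(1 - Xv ^ 4 * Zv) * x4z_series (\<lambda>_. 1) = 1"
proof (rule fps_ext)
  fix n
  let ?G = "x4z_series (\<lambda>_. 1)"
  have "((1 - Xv ^ 4 * Zv) * ?G) $ n = ?G $ n - fps_X ^ 4 * (fps_X * ?G) $ n"
    unfolding x4z_eq by (simp add: algebra_simps)
  also have "\<dots> = 1 $ n"
  proof (cases n)
    case (Suc m)
    have "fps_X ^ (4 * Suc m) = (fps_X ^ 4 :: rat fps fps) * fps_X ^ (4 * m)"
      by (simp add: power_add[symmetric])
    then show ?thesis using Suc by (simp add: x4z_series_def)
  qed (simp add: x4z_series_def)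
  finally show "((1 - Xv ^ 4 * Zv) * ?G) $ n = 1 $ n" .
qed

lemma x4z_series_square: "x4z_series (\<lambda>_. 1) * x4z_series (\<lambda>_. 1) = x4z_series (\<lambda>i. i + 1)"
proof (rule fps_ext)
  fix n
  have "(x4z_series (\<lambda>_. 1) * x4z_series (\<lambda>_. 1)) $ n = (\<Sum>i=0..n. fps_X ^ (4 * i) * fps_X ^ (4 * (n - i)) :: rat fps fps)"
    by (simp add: x4z_series_def fps_mult_nth)
  also have "\<dots> = (\<Sum>i=0..n. fps_X ^ (4 * n))"
    by (rule sum.cong[OF refl]) (simp add: power_add[symmetric] algebra_simps)
  finally show "(x4z_series (\<lambda>_. 1) * x4z_series (\<lambda>_. 1)) $ n = x4z_series (\<lambda>i. i + 1) $ n"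
    by (simp add: x4z_series_def)
qed

lemma inverse_one_fps2: "inverse (1 :: rat fps fps) = 1"
  by (rule fps_inverse_one'[OF fps_inverse_one])

lemma inverse_one_minus_x4z: "inverse (1 - Xv ^ 4 * Zv) = x4z_series (\<lambda>_. 1)"
  by (rule fps_inverse_eqI[OF one_minus_x4z_mult]) (simp_all add: x4z_eq x4z_series_def inverse_one_fps2)

lemma inverse_one_minus_x4z_square: "inverse ((1 - Xv ^ 4 * Zv) ^ 2) = x4z_series (\<lambda>i. i + 1)"
proof (rule fps_inverse_eqI)
  have "(1 - Xv ^ 4 * Zv) ^ 2 * x4z_series (\<lambda>i. i + 1) =
      ((1 - Xv ^ 4 * Zv) * x4z_series (\<lambda>_. 1)) * ((1 - Xv ^ 4 * Zv) * x4z_series (\<lambda>_. 1))"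
    unfolding x4z_series_square[symmetric] power2_eq_square by (simp only: ac_simps)
  then show "(1 - Xv ^ 4 * Zv) ^ 2 * x4z_series (\<lambda>i. i + 1) = 1"
    unfolding one_minus_x4z_mult by simp
qed (simp_all add: x4z_eq x4z_series_def power2_eq_square inverse_one_fps2)

lemma coeff3_first_term:
  "coeff3 (Dv ^ 2 * Xv ^ 8 * Zv ^ 2 * x4z_series (\<lambda>_. 1)) l p n = (if n = 2 \<and> p = 4 * l \<and> 2 \<le> l then 1 else 0)"
proof (cases "2 \<le> n \<and> 8 \<le> p \<and> 2 \<le> l")
  case True
  have "coeff3 (Dv ^ 2 * Xv ^ 8 * Zv ^ 2 * (x4z_series (\<lambda>_. 1) * 1)) l p n =
      (\<Sum>i\<le>l - 2. if 4 * i \<le> p - 8 then (if l - 2 - i = 0 \<and> p - 8 - 4 * i = 0 \<and> n - 2 = 0 then 1 else 0) else 0)"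
    unfolding coeff3_monomial_mult coeff3_x4z_series_mult coeff3_one using True by simp
  also have "\<dots> = (\<Sum>i\<le>l - 2. if i = l - 2 then (if n = 2 \<and> p = 4 * l then 1 else 0) else 0)"
    by (rule sum.cong[OF refl]) (use True in auto)
  also have "\<dots> = (if n = 2 \<and> p = 4 * l \<and> 2 \<le> l then 1 else 0)" using True by simp
  finally show ?thesis by simp
qed (auto simp: coeff3_monomial_mult simp del: power_numeral_reduce)

lemma coeff3_recurrence_term:
  "coeff3 (Dv * Xv ^ 4 * Zv * x4z_series c * F) l p n =
     (if n = 0 then 0 else \<Sum>i | i < l \<and> 4 + 4 * i \<le> p. of_nat (c i) * coeff3 F (l - 1 - i) (p - 4 - 4 * i) (n - 1))"
proof -
  have e: "Dv * Xv ^ 4 * Zv * x4z_series c * F = Dv ^ 1 * Xv ^ 4 * Zv ^ 1 * (x4z_series c * F)"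
    by (simp add: mult.assoc)
  show ?thesis
  proof (cases "n = 0 \<or> p < 4 \<or> l = 0")
    case True then show ?thesis unfolding e coeff3_monomial_mult by auto
  next
    case False
    then have s: "{i. i < l \<and> 4 + 4 * i \<le> p} = {i \<in> {..l - 1}. 4 * i \<le> p - 4}" by auto
    show ?thesis using False
      unfolding e coeff3_monomial_mult coeff3_x4z_series_mult s sum.inter_filter[OF finite_atMost]
      by (auto intro!: sum.cong)
  qed
qed

lemma dcp_count_two_noses_rat:
  "(of_nat (dcp_count 2 n p l) :: rat) = (if n = 2 \<and> p = 4 * l \<and> 2 \<le> l then 1 else 0)
   + (if n = 0 then 0 else \<Sum>i | i < l \<and> 4 + 4 * i \<le> p. of_nat (i + 1) * of_nat (dcp_count 2 (n - 1) (p - 4 - 4 * i) (l - 1 - i)))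
   + (if n = 0 then 0 else \<Sum>i | i < l \<and> 4 + 4 * i \<le> p. of_nat 1 * of_nat (dcp_count 1 (n - 1) (p - 4 - 4 * i) (l - 1 - i)))
   + (if n = 0 then 0 else \<Sum>i | i < l \<and> 4 + 4 * i \<le> p.
       of_nat (if i = 0 then 1 else 0) * of_nat (dcp_count 0 (n - 1) (p - 4 - 4 * i) (l - 1 - i)))"
proof (cases "n = 0")
  case False
  let ?S = "{i. i < l \<and> 4 + 4 * i \<le> p}"
  have "(of_nat (dcp_count 2 n p l) :: rat) = (if n = 2 \<and> p = 4 * l \<and> 2 \<le> l then 1 else 0)
     + (\<Sum>i\<in>?S. of_nat (i + 1) * of_nat (dcp_count 2 (n - 1) (p - 4 - 4 * i) (l - 1 - i))
        + of_nat 1 * of_nat (dcp_count 1 (n - 1) (p - 4 - 4 * i) (l - 1 - i))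
        + of_nat (if i = 0 then 1 else 0) * of_nat (dcp_count 0 (n - 1) (p - 4 - 4 * i) (l - 1 - i)))"
    by (subst dcp_count_two_noses) (auto simp: of_nat_sum algebra_simps intro!: sum.cong)
  then show ?thesis using False by (simp only: sum.distrib if_False)
qed (simp add: dcp_count_lt_2)

theorem mainTheorem4:
  shows "Agf = Dv ^ 2 * Xv ^ 8 * Zv ^ 2 * inverse (1 - Xv ^ 4 * Zv)
             + Dv * Xv ^ 4 * Zv * inverse ((1 - Xv ^ 4 * Zv) ^ 2) * Agf
             + Dv * Xv ^ 4 * Zv * inverse (1 - Xv ^ 4 * Zv) * Bgf
             + Dv * Xv ^ 4 * Zv * Cgf"
proof (rule coeff3_eqI)
  fix l p n
  have C: "Dv * Xv ^ 4 * Zv * Cgf = Dv * Xv ^ 4 * Zv * x4z_series (\<lambda>i. if i = 0 then 1 else 0) * Cgf"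
    by (simp add: x4z_series_delta)
  show "coeff3 Agf l p n = coeff3 (Dv ^ 2 * Xv ^ 8 * Zv ^ 2 * inverse (1 - Xv ^ 4 * Zv)
             + Dv * Xv ^ 4 * Zv * inverse ((1 - Xv ^ 4 * Zv) ^ 2) * Agf
             + Dv * Xv ^ 4 * Zv * inverse (1 - Xv ^ 4 * Zv) * Bgf
             + Dv * Xv ^ 4 * Zv * Cgf) l p n"
    unfolding C inverse_one_minus_x4z inverse_one_minus_x4z_square
    unfolding coeff3_add coeff3_first_term coeff3_recurrence_term Agf_def Bgf_def Cgf_def coeff3_GF
    by (rule dcp_count_two_noses_rat)
qed

end
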